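(* Let $(N,F)$ be an $F$-isocrystal of dimension $n$ and $0\le r\le n$. Let $M,M'$ be $O_L$-lattices in $N$ with $M\supsetneq M'\supsetneq\pi M$, $\mathrm{inv}(M,FM)=\omega_r$ and $\mathrm{inv}(M',FM')=\omega_r$. Then there exists an $O_L$-lattice $\tilde M$ with $M\supset\tilde M\supset M'$, $\dim_{\mathbf F}\tilde M/M'=1$ and $\mathrm{inv}(\tilde M,F\tilde M)=\omega_r$.
   Context: $F$ finite over $\mathbf Q_p$ with uniformizer $\pi$, $L$ the completion of the maximal unramified extension, $O_L$ its integers, $\mathbf F$ its residue field, $\sigma$ the Frobenius of $L/F$. An $F$-isocrystal is a finite-dimensional $L$-space $N$ with a $\sigma$-linear bijection $F$. $\omega_r=(1^r,0^{n-r})$. For lattices $M,M'$, $\mathrm{inv}(M,M')=(\mu_1\ge\dots\ge\mu_n)$ iff $M$ has a basis $e_i$ with $\pi^{\mu_i}e_i$ a basis of $M'$; thus $\mathrm{inv}(M,FM)=\omega_r$ means $\pi M\subset FM\subset M$ with $\dim_{\mathbf F}M/FM=r$. *)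

theory Defs
  imports "HOL-Analysis.Analysis"
begin

text \<open>The predicate frob_data below lists properties which characterise the triple
(L, unif, frob) = (completion of the maximal unramified extension of F, a uniformizer
of F, Frobenius of L/F), F being the fixed field of frob (finite over Q_p).\<close>

definition ideal_pow :: "'L::field set \<Rightarrow> 'L \<Rightarrow> nat \<Rightarrow> 'L set" where
  "ideal_pow OL unif k = {unif ^ k * y | y. y \<in> OL}"

definition frob_data :: "nat \<Rightarrow> nat \<Rightarrow> 'L::field_char_0 set \<Rightarrow> 'L \<Rightarrow> ('L \<Rightarrow> 'L) \<Rightarrow> bool" where
  "frob_data p q OL unif frob \<longleftrightarrow>
     prime p \<and> (\<exists>f\<ge>1. q = p ^ f) \<and>
     \<comment> \<open>OL is a subring of L\<close>
     0 \<in> OL \<and> 1 \<in> OL \<and>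
     (\<forall>x\<in>OL. \<forall>y\<in>OL. x + y \<in> OL \<and> x - y \<in> OL \<and> x * y \<in> OL) \<and>
     \<comment> \<open>OL is a valuation ring of L\<close>
     (\<forall>x. x \<notin> OL \<longrightarrow> inverse x \<in> OL) \<and>
     \<comment> \<open>unif is a uniformizer: a nonzero non-unit generating the maximal ideal\<close>
     unif \<in> OL \<and> unif \<noteq> 0 \<and> inverse unif \<notin> OL \<and>
     (\<forall>x\<in>OL. inverse x \<notin> OL \<longrightarrow> x \<in> ideal_pow OL unif 1) \<and>
     \<comment> \<open>the valuation is discrete (separatedness)\<close>
     (\<forall>x. (\<forall>k. x \<in> ideal_pow OL unif k) \<longrightarrow> x = 0) \<and>
     \<comment> \<open>L is complete for the unif-adic topology\<close>
     (\<forall>s::nat \<Rightarrow> 'L. (\<forall>k. \<exists>N. \<forall>m\<ge>N. \<forall>n\<ge>N. s m - s n \<in> ideal_pow OL unif k) \<longrightarrow>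
        (\<exists>l. \<forall>k. \<exists>N. \<forall>n\<ge>N. s n - l \<in> ideal_pow OL unif k)) \<and>
     \<comment> \<open>the residue field has characteristic p\<close>
     of_nat p \<in> ideal_pow OL unif 1 \<and>
     \<comment> \<open>the residue field is algebraic over F_p\<close>
     (\<forall>x\<in>OL. \<exists>k\<ge>1. x ^ (p ^ k) - x \<in> ideal_pow OL unif 1) \<and>
     \<comment> \<open>the residue field is algebraically closed\<close>
     (\<forall>d\<ge>1. \<forall>a::nat \<Rightarrow> 'L. (\<forall>i<d. a i \<in> OL) \<longrightarrow>
        (\<exists>x\<in>OL. x ^ d + (\<Sum>i<d. a i * x ^ i) \<in> ideal_pow OL unif 1)) \<and>
     \<comment> \<open>frob is a field automorphism preserving OL, fixing unif, lifting x \<mapsto> x^q\<close>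
     bij frob \<and> (\<forall>x y. frob (x + y) = frob x + frob y) \<and>
     (\<forall>x y. frob (x * y) = frob x * frob y) \<and> frob 1 = 1 \<and>
     frob ` OL = OL \<and> frob unif = unif \<and>
     (\<forall>x\<in>OL. frob x - x ^ q \<in> ideal_pow OL unif 1)"

text \<open>The n-dimensional L-space N is realised as 'L^'n (n = CARD('n)).\<close>

definition lin_indep_fam :: "('n::finite \<Rightarrow> 'L::field ^ 'n) \<Rightarrow> bool" where
  "lin_indep_fam B \<longleftrightarrow> (\<forall>c. (\<Sum>i\<in>UNIV. c i *s B i) = 0 \<longrightarrow> (\<forall>i. c i = 0))"

definition O_span :: "'L::field set \<Rightarrow> ('n::finite \<Rightarrow> 'L ^ 'n) \<Rightarrow> ('L ^ 'n) set" where
  "O_span OL B = {\<Sum>i\<in>UNIV. c i *s B i | c. \<forall>i. c i \<in> OL}"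

definition is_lattice :: "'L::field set \<Rightarrow> ('L ^ 'n::finite) set \<Rightarrow> bool" where
  "is_lattice OL M \<longleftrightarrow> (\<exists>B. lin_indep_fam B \<and> M = O_span OL B)"

text \<open>inv(M,M') = mu (mu viewed as an unordered family of integers).\<close>
definition has_inv :: "'L::field set \<Rightarrow> 'L \<Rightarrow> ('L ^ 'n::finite) set \<Rightarrow> ('L ^ 'n) set \<Rightarrow> ('n \<Rightarrow> int) \<Rightarrow> bool" where
  "has_inv OL unif M M' mu \<longleftrightarrow>
     (\<exists>B. lin_indep_fam B \<and> M = O_span OL B \<and> M' = O_span OL (\<lambda>i. (unif powi mu i) *s B i))"

definition inv_omega :: "'L::field set \<Rightarrow> 'L \<Rightarrow> ('L ^ 'n::finite) set \<Rightarrow> ('L ^ 'n) set \<Rightarrow> nat \<Rightarrow> bool" where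
  "inv_omega OL unif M M' r \<longleftrightarrow>
     (\<exists>S. card S = r \<and> has_inv OL unif M M' (\<lambda>i. if i \<in> S then 1 else 0))"

text \<open>dim of Mt/M' equal to 1 (used when unif Mt \<subseteq> M', so the quotient is a vector
space over the residue field): Mt/M' is nonzero and generated by one element.\<close>
definition quot_dim_one :: "'L::field set \<Rightarrow> ('L ^ 'n::finite) set \<Rightarrow> ('L ^ 'n) set \<Rightarrow> bool" where
  "quot_dim_one OL Mt M' \<longleftrightarrow>
     (\<exists>x\<in>Mt. x \<notin> M' \<and> Mt = {y + c *s x | y c. y \<in> M' \<and> c \<in> OL})"

end

theory Submission
  imports Defs
begin

text \<open>Put V = unif F^-1. A lattice \<Lambda> has inv(\<Lambda>, F \<Lambda>) = \<omega>_r iff it is stable under F and V: the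
  elementary divisors are then 0 and 1, and their number r is the valuation of det F, because a
  change of basis of determinant d only contributes the unit \<sigma>(d)/d. Since unif M \<subseteq> M' \<subseteq> M, the
  maps F and V induce on the residue field vector space M/M' a \<sigma>-semilinear and a
  \<sigma>^-1-semilinear map with VF = 0, and M' + O_L x is stable under F and V as soon as the line
  through x is. If F kills a nonzero vector of ker V, that vector spans such a line. Otherwise F is
  injective on ker V, and if ker V \<noteq> 0 a fixed vector of F in ker V does; if ker V = 0, then V is
  injective and a fixed vector of V does, because F maps M/M' into ker V. Fixed vectors exist since
  an injective semilinear map over an algebraically closed field has one: on the span of the
  iterates of a vector, a fixed vector amounts to a root of an additive polynomial.\<close>

section \<open>Discrete valuation rings\<close>

locale discrete_valuation_ring =
  fixes OL :: "'L::field set" and unif :: 'L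
  assumes OL_zero [simp]: "0 \<in> OL" and OL_one [simp]: "1 \<in> OL"
    and OL_add [intro]: "x \<in> OL \<Longrightarrow> y \<in> OL \<Longrightarrow> x + y \<in> OL"
    and OL_diff [intro]: "x \<in> OL \<Longrightarrow> y \<in> OL \<Longrightarrow> x - y \<in> OL"
    and OL_mult [intro]: "x \<in> OL \<Longrightarrow> y \<in> OL \<Longrightarrow> x * y \<in> OL"
    and inverse_notin_OL: "x \<notin> OL \<Longrightarrow> inverse x \<in> OL"
    and unif_OL [simp]: "unif \<in> OL" and unif_nonzero [simp]: "unif \<noteq> 0"
    and inverse_unif_notin_OL: "inverse unif \<notin> OL"
    and nonunit_in_ideal: "x \<in> OL \<Longrightarrow> inverse x \<notin> OL \<Longrightarrow> x \<in> ideal_pow OL unif 1"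
    and ideal_pow_separated: "(\<And>k. x \<in> ideal_pow OL unif k) \<Longrightarrow> x = 0"
begin

definition max_ideal :: "'L set" where
  "max_ideal = ideal_pow OL unif 1"

definition OL_unit :: "'L \<Rightarrow> bool" where
  "OL_unit x \<longleftrightarrow> x \<in> OL \<and> x \<noteq> 0 \<and> inverse x \<in> OL"

lemma OL_minus [intro]: "x \<in> OL \<Longrightarrow> - x \<in> OL"
  using OL_diff[of 0 x] by simp

lemma OL_power [intro]: "x \<in> OL \<Longrightarrow> x ^ k \<in> OL"
  by (induction k) auto

lemma OL_sum [intro]: "(\<And>i. i \<in> A \<Longrightarrow> f i \<in> OL) \<Longrightarrow> sum f A \<in> OL"
  by (induction A rule: infinite_finite_induct) auto

lemma OL_prod [intro]: "(\<And>i. i \<in> A \<Longrightarrow> f i \<in> OL) \<Longrightarrow> prod f A \<in> OL"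
  by (induction A rule: infinite_finite_induct) auto

lemma OL_divide_or_inverse: "x / y \<in> OL \<or> y / x \<in> OL"
  using inverse_notin_OL[of "x / y"] by auto

lemma mem_ideal_pow_iff: "x \<in> ideal_pow OL unif k \<longleftrightarrow> x / unif ^ k \<in> OL"
proof
  assume "x \<in> ideal_pow OL unif k"
  then show "x / unif ^ k \<in> OL" unfolding ideal_pow_def by auto
next
  assume "x / unif ^ k \<in> OL"
  moreover have "x = unif ^ k * (x / unif ^ k)" by simp
  ultimately show "x \<in> ideal_pow OL unif k" unfolding ideal_pow_def by blast
qed

lemma max_ideal_iff: "x \<in> max_ideal \<longleftrightarrow> x / unif \<in> OL"
  unfolding max_ideal_def mem_ideal_pow_iff by simp

lemma max_ideal_zero [simp]: "0 \<in> max_ideal"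
  by (simp add: max_ideal_iff)

lemma unif_mult_max_ideal: "y \<in> OL \<Longrightarrow> unif * y \<in> max_ideal"
  by (simp add: max_ideal_iff)

lemma max_ideal_OL: "x \<in> max_ideal \<Longrightarrow> x \<in> OL"
  using OL_mult[of unif "x / unif"] by (simp add: max_ideal_iff)

lemma max_ideal_add [intro]: "x \<in> max_ideal \<Longrightarrow> y \<in> max_ideal \<Longrightarrow> x + y \<in> max_ideal"
  unfolding max_ideal_iff add_divide_distrib by (rule OL_add)

lemma max_ideal_diff [intro]: "x \<in> max_ideal \<Longrightarrow> y \<in> max_ideal \<Longrightarrow> x - y \<in> max_ideal"
  unfolding max_ideal_iff diff_divide_distrib by (rule OL_diff)

lemma max_ideal_mult_left [intro]: "x \<in> OL \<Longrightarrow> y \<in> max_ideal \<Longrightarrow> x * y \<in> max_ideal"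
  unfolding max_ideal_iff times_divide_eq_right[symmetric] by (rule OL_mult)

lemma max_ideal_mult_right [intro]: "x \<in> max_ideal \<Longrightarrow> y \<in> OL \<Longrightarrow> x * y \<in> max_ideal"
  using max_ideal_mult_left[of y x] by (simp add: mult.commute)

lemma max_ideal_sum [intro]: "(\<And>i. i \<in> A \<Longrightarrow> f i \<in> max_ideal) \<Longrightarrow> sum f A \<in> max_ideal"
  by (induction A rule: infinite_finite_induct) auto

lemma unif_power_max_ideal: "d > 0 \<Longrightarrow> unif ^ d \<in> max_ideal"
  using unif_mult_max_ideal[of "unif ^ (d - 1)"] OL_power[OF unif_OL] by (cases d) auto

lemma OL_unit_nonzero: "OL_unit x \<Longrightarrow> x \<noteq> 0"
  and OL_unit_OL: "OL_unit x \<Longrightarrow> x \<in> OL"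
  and OL_unit_inverse_OL: "OL_unit x \<Longrightarrow> inverse x \<in> OL"
  unfolding OL_unit_def by simp_all

lemma OL_unit_one [simp]: "OL_unit 1"
  unfolding OL_unit_def by simp

lemma OL_unit_minus_one [simp]: "OL_unit (- 1)"
  unfolding OL_unit_def by auto

lemma OL_unit_mult [intro]: "OL_unit x \<Longrightarrow> OL_unit y \<Longrightarrow> OL_unit (x * y)"
  unfolding OL_unit_def by (auto simp: inverse_mult_distrib)

lemma OL_unit_inverse [intro]: "OL_unit x \<Longrightarrow> OL_unit (inverse x)"
  unfolding OL_unit_def by auto

lemma OL_unit_divide [intro]: "OL_unit x \<Longrightarrow> OL_unit y \<Longrightarrow> OL_unit (x / y)"
  by (simp add: divide_inverse OL_unit_inverse OL_unit_mult)

lemma OL_divide_unit: "x \<in> OL \<Longrightarrow> OL_unit y \<Longrightarrow> x / y \<in> OL"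
  unfolding OL_unit_def by (simp add: divide_inverse OL_mult)

lemma OL_unit_not_max_ideal: "OL_unit x \<Longrightarrow> x \<notin> max_ideal"
proof
  assume u: "OL_unit x" and "x \<in> max_ideal"
  then have "inverse x * (x / unif) \<in> OL"
    unfolding max_ideal_iff OL_unit_def by (intro OL_mult) auto
  also have "inverse x * (x / unif) = inverse unif"
    using u by (simp add: OL_unit_def divide_inverse)
  finally show False using inverse_unif_notin_OL by simp
qed

lemma nonunit_max_ideal: "x \<in> OL \<Longrightarrow> \<not> OL_unit x \<Longrightarrow> x \<in> max_ideal"
  using nonunit_in_ideal unfolding OL_unit_def max_ideal_def
  by (metis max_ideal_def max_ideal_zero)

lemma OL_unit_add_max_ideal: "OL_unit t \<Longrightarrow> z \<in> max_ideal \<Longrightarrow> OL_unit (t + z)"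
  using max_ideal_diff[of "t + z" z] max_ideal_OL[of z]
  by (metis OL_add OL_unit_OL OL_unit_not_max_ideal add_diff_cancel nonunit_max_ideal)

lemma unif_power_unit_ratio: "OL_unit (unif ^ a / unif ^ b) \<Longrightarrow> a = b"
proof (rule ccontr)
  assume u: "OL_unit (unif ^ a / unif ^ b)" and "a \<noteq> b"
  then consider "a < b" | "b < a" by linarith
  then show False
  proof cases
    case 1
    then have "OL_unit (inverse (unif ^ (b - a)))"
      using u by (simp add: power_diff field_simps)
    then have "OL_unit (unif ^ (b - a))" using OL_unit_inverse by fastforce
    moreover have "unif ^ (b - a) \<in> max_ideal" using 1 by (intro unif_power_max_ideal) simp
    ultimately show False using OL_unit_not_max_ideal by blast
  next
    case 2
    then have "OL_unit (unif ^ (a - b))" using u by (simp add: power_diff)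
    moreover have "unif ^ (a - b) \<in> max_ideal" using 2 by (intro unif_power_max_ideal) simp
    ultimately show False using OL_unit_not_max_ideal by blast
  qed
qed

lemma OL_factor_unif_power:
  assumes "x \<in> OL" "x \<noteq> 0"
  obtains m u where "OL_unit u" "x = unif ^ m * u"
proof -
  have "\<exists>k. x \<notin> ideal_pow OL unif k" using ideal_pow_separated assms(2) by blast
  define k where "k = (LEAST k. x \<notin> ideal_pow OL unif k)"
  have k: "x \<notin> ideal_pow OL unif k" "\<And>j. j < k \<Longrightarrow> x \<in> ideal_pow OL unif j"
    unfolding k_def using LeastI_ex[OF \<open>\<exists>k. _\<close>] not_less_Least by blast+
  have "k \<noteq> 0" using k(1) assms(1) unfolding mem_ideal_pow_iff by (metis div_by_1 power_0)
  then obtain m where m: "k = Suc m" by (cases k) auto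
  define u where "u = x / unif ^ m"
  have "u \<in> OL" using k(2)[of m] m by (simp add: u_def mem_ideal_pow_iff)
  moreover have "u \<notin> max_ideal"
    using k(1) by (simp add: m u_def max_ideal_iff mem_ideal_pow_iff mult.commute)
  ultimately have "OL_unit u" using nonunit_max_ideal by blast
  moreover have "x = unif ^ m * u" unfolding u_def by simp
  ultimately show thesis by (rule that)
qed

lemma exists_coeff_dividing_all:
  assumes "finite I" "i0 \<in> I" "c i0 \<noteq> 0"
  shows "\<exists>j\<in>I. c j \<noteq> 0 \<and> (\<forall>i\<in>I. c i / c j \<in> OL)"
  using assms
proof (induction I arbitrary: i0 rule: finite_induct)
  case empty then show ?case by simp
next
  case (insert a I)
  show ?case
  proof (cases "\<exists>i\<in>I. c i \<noteq> 0")
    case False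
    then show ?thesis using insert by (auto intro!: bexI[of _ a])
  next
    case True
    then obtain j where j: "j \<in> I" "c j \<noteq> 0" "\<forall>i\<in>I. c i / c j \<in> OL"
      using insert.IH by blast
    show ?thesis
    proof (cases "c a / c j \<in> OL")
      case True then show ?thesis using j by auto
    next
      case False
      then have ja: "c j / c a \<in> OL" using OL_divide_or_inverse by blast
      have "c i / c a \<in> OL" if "i \<in> I" for i
        using OL_mult[OF j(3)[rule_format, OF that] ja] j(2) by simp
      then show ?thesis using False by (auto intro!: bexI[of _ a])
    qed
  qed
qed

definition OL_aut :: "('L \<Rightarrow> 'L) \<Rightarrow> bool" where
  "OL_aut t \<longleftrightarrow> bij t \<and> (\<forall>x y. t (x + y) = t x + t y) \<and> (\<forall>x y. t (x * y) = t x * t y)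
     \<and> t 1 = 1 \<and> (\<forall>x. t x \<in> OL \<longleftrightarrow> x \<in> OL) \<and> t unif = unif"

context
  fixes t assumes t: "OL_aut t"
begin

lemma OL_aut_add: "t (x + y) = t x + t y" and OL_aut_mult: "t (x * y) = t x * t y"
  and OL_aut_one: "t 1 = 1" and OL_aut_OL_iff: "t x \<in> OL \<longleftrightarrow> x \<in> OL"
  and OL_aut_unif: "t unif = unif" and OL_aut_bij: "bij t"
  using t unfolding OL_aut_def by auto

lemma OL_aut_zero: "t 0 = 0"
  using OL_aut_add[of 0 0] by (metis add.right_neutral add_left_cancel)

lemma OL_aut_minus: "t (- x) = - t x"
  using OL_aut_add[of x "- x"] OL_aut_zero by (simp add: eq_neg_iff_add_eq_0 add.commute)

lemma OL_aut_diff: "t (x - y) = t x - t y"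
  using OL_aut_add[of x "- y"] OL_aut_minus by simp

lemma OL_aut_sum: "t (sum f A) = (\<Sum>i\<in>A. t (f i))"
  by (induction A rule: infinite_finite_induct) (auto simp: OL_aut_zero OL_aut_add)

lemma OL_aut_prod: "t (prod f A) = (\<Prod>i\<in>A. t (f i))"
  by (induction A rule: infinite_finite_induct) (auto simp: OL_aut_one OL_aut_mult)

lemma OL_aut_power: "t (x ^ k) = t x ^ k"
  by (induction k) (auto simp: OL_aut_one OL_aut_mult)

lemma OL_aut_of_int_sign: "t (of_int (sign p)) = of_int (sign p)"
  by (cases p rule: sign_cases) (auto simp: OL_aut_one OL_aut_minus)

lemma OL_aut_inv_apply: "t (inv t x) = x"
  using OL_aut_bij by (simp add: bij_is_surj surj_f_inv_f)

lemma OL_aut_eq_zero_iff: "t x = 0 \<longleftrightarrow> x = 0"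
  using OL_aut_bij OL_aut_zero by (metis bij_pointE)

lemma OL_aut_inverse: "t (inverse x) = inverse (t x)"
proof (cases "x = 0")
  case True then show ?thesis by (simp add: OL_aut_zero)
next
  case False
  then have "t x * t (inverse x) = 1" using OL_aut_mult[of x "inverse x"] OL_aut_one by simp
  then show ?thesis by (simp add: inverse_unique)
qed

lemma OL_aut_divide: "t (x / y) = t x / t y"
  by (simp add: divide_inverse OL_aut_mult OL_aut_inverse)

lemma OL_aut_max_ideal_iff: "t x \<in> max_ideal \<longleftrightarrow> x \<in> max_ideal"
  unfolding max_ideal_iff using OL_aut_divide[of x unif] OL_aut_unif OL_aut_OL_iff by metis

lemma OL_aut_unit_iff: "OL_unit (t x) \<longleftrightarrow> OL_unit x"
  unfolding OL_unit_def using OL_aut_OL_iff OL_aut_eq_zero_iff OL_aut_inverse by metis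

lemma OL_aut_inv: "OL_aut (inv t)"
proof -
  have it: "inv t (t x) = x" for x using OL_aut_bij by (simp add: bij_is_inj inv_f_f)
  have "bij (inv t)" using OL_aut_bij by (simp add: bij_imp_bij_inv)
  moreover have "inv t (x + y) = inv t x + inv t y" for x y
    using OL_aut_add[of "inv t x" "inv t y"] by (metis it OL_aut_inv_apply)
  moreover have "inv t (x * y) = inv t x * inv t y" for x y
    using OL_aut_mult[of "inv t x" "inv t y"] by (metis it OL_aut_inv_apply)
  moreover have "inv t 1 = 1" using OL_aut_one it by metis
  moreover have "inv t x \<in> OL \<longleftrightarrow> x \<in> OL" for x using OL_aut_OL_iff OL_aut_inv_apply by metis
  moreover have "inv t unif = unif" using OL_aut_unif it by metis
  ultimately show ?thesis unfolding OL_aut_def by blast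
qed

lemma OL_aut_funpow: "OL_aut (t ^^ k)"
proof (induction k)
  case 0 then show ?case unfolding OL_aut_def by auto
next
  case (Suc k)
  then show ?case unfolding OL_aut_def using OL_aut_add OL_aut_mult OL_aut_one OL_aut_OL_iff
      OL_aut_unif OL_aut_bij
    by (auto intro: bij_comp)
qed

text \<open>Such an automorphism fixes unif and preserves units, hence valuations.\<close>
lemma OL_aut_ratio_unit:
  assumes "z \<noteq> 0"
  shows "OL_unit (t z / z)"
proof -
  have integral: "OL_unit (t x / x)" if x: "x \<in> OL" "x \<noteq> 0" for x
  proof -
    obtain m u where u: "OL_unit u" "x = unif ^ m * u"
      using OL_factor_unif_power[OF x] by blast
    then have "t x / x = t u / u" by (simp add: OL_aut_mult OL_aut_power OL_aut_unif)
    then show ?thesis using u(1) OL_aut_unit_iff OL_unit_divide by simp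
  qed
  show ?thesis
  proof (cases "z \<in> OL")
    case True then show ?thesis using integral assms by blast
  next
    case False
    then have "OL_unit (t (inverse z) / inverse z)"
      using assms inverse_notin_OL by (intro integral) auto
    then have "OL_unit (inverse (t (inverse z) / inverse z))" by (rule OL_unit_inverse)
    then show ?thesis by (simp add: OL_aut_inverse divide_inverse mult.commute)
  qed
qed

end

section \<open>Lattices in L^n\<close>

definition OL_submodule :: "('L ^ 'n) set \<Rightarrow> bool" where
  "OL_submodule S \<longleftrightarrow> 0 \<in> S \<and> (\<forall>x\<in>S. \<forall>y\<in>S. x + y \<in> S) \<and> (\<forall>c\<in>OL. \<forall>x\<in>S. c *s x \<in> S)"

lemma OL_submodule_zero: "OL_submodule S \<Longrightarrow> 0 \<in> S"
  and OL_submodule_add: "OL_submodule S \<Longrightarrow> x \<in> S \<Longrightarrow> y \<in> S \<Longrightarrow> x + y \<in> S"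
  and OL_submodule_scale: "OL_submodule S \<Longrightarrow> c \<in> OL \<Longrightarrow> x \<in> S \<Longrightarrow> c *s x \<in> S"
  unfolding OL_submodule_def by auto

lemma OL_submodule_neg: "OL_submodule S \<Longrightarrow> x \<in> S \<Longrightarrow> - x \<in> S"
  using OL_submodule_scale[of S "-1" x] by (simp add: OL_minus)

lemma OL_submodule_diff: "OL_submodule S \<Longrightarrow> x \<in> S \<Longrightarrow> y \<in> S \<Longrightarrow> x - y \<in> S"
  using OL_submodule_add[of S x "- y"] OL_submodule_neg[of S y] by simp

lemma OL_submodule_sum: "OL_submodule S \<Longrightarrow> (\<And>i. i \<in> A \<Longrightarrow> f i \<in> S) \<Longrightarrow> sum f A \<in> S"
  by (induction A rule: infinite_finite_induct) (auto simp: OL_submodule_zero OL_submodule_add)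

lemma OL_submodule_scale_max_ideal:
  assumes "OL_submodule S" "unif *s x \<in> S" "c \<in> max_ideal"
  shows "c *s x \<in> S"
proof -
  have "c *s x = (c / unif) *s (unif *s x)" by simp
  then show ?thesis using OL_submodule_scale[OF assms(1) _ assms(2)] assms(3) max_ideal_iff by metis
qed

lemma O_span_memI: "(\<And>i. c i \<in> OL) \<Longrightarrow> x = (\<Sum>i\<in>UNIV. c i *s B i) \<Longrightarrow> x \<in> O_span OL B"
  unfolding O_span_def by blast

lemma O_span_memE:
  assumes "x \<in> O_span OL B"
  obtains c where "\<And>i. c i \<in> OL" "x = (\<Sum>i\<in>UNIV. c i *s B i)"
  using assms unfolding O_span_def by blast

lemma OL_submodule_O_span: "OL_submodule (O_span OL B)"
  unfolding OL_submodule_def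
proof (intro conjI ballI)
  show "0 \<in> O_span OL B" by (rule O_span_memI[of "\<lambda>i. 0"]) auto
next
  fix x y assume "x \<in> O_span OL B" "y \<in> O_span OL B"
  then obtain a b where "\<And>i. a i \<in> OL" "x = (\<Sum>i\<in>UNIV. a i *s B i)"
    "\<And>i. b i \<in> OL" "y = (\<Sum>i\<in>UNIV. b i *s B i)"
    by (metis O_span_memE)
  then show "x + y \<in> O_span OL B"
    by (intro O_span_memI[of "\<lambda>i. a i + b i"]) (auto simp: sum.distrib vec.scale_left_distrib)
next
  fix c x assume "c \<in> OL" "x \<in> O_span OL B"
  then obtain a where "\<And>i. a i \<in> OL" "x = (\<Sum>i\<in>UNIV. a i *s B i)" by (metis O_span_memE)
  then show "c *s x \<in> O_span OL B"
    using \<open>c \<in> OL\<close> by (intro O_span_memI[of "\<lambda>i. c * a i"]) (auto simp: vec.scale_sum_right)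
qed

lemma O_span_basis_mem: "B i \<in> O_span OL B"
proof (rule O_span_memI[of "\<lambda>j. if j = i then 1 else 0"])
  have "(\<Sum>j\<in>UNIV. (if j = i then 1 else 0) *s B j) = (\<Sum>j\<in>UNIV. if j = i then B j else 0)"
    by (rule sum.cong) auto
  then show "B i = (\<Sum>j\<in>UNIV. (if j = i then 1 else 0) *s B j)" by simp
qed auto

lemma O_span_least: "OL_submodule S \<Longrightarrow> (\<And>i. B i \<in> S) \<Longrightarrow> O_span OL B \<subseteq> S"
  unfolding O_span_def by (auto intro!: OL_submodule_sum OL_submodule_scale)

lemma O_span_mono: "(\<And>i. C i \<in> O_span OL D) \<Longrightarrow> O_span OL C \<subseteq> O_span OL D"
  by (rule O_span_least[OF OL_submodule_O_span])

definition semilinear :: "('L \<Rightarrow> 'L) \<Rightarrow> ('L ^ 'n \<Rightarrow> 'L ^ 'n) \<Rightarrow> bool" where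
  "semilinear t H \<longleftrightarrow> (\<forall>x y. H (x + y) = H x + H y) \<and> (\<forall>c x. H (c *s x) = t c *s H x)"

lemma semilinear_add: "semilinear t H \<Longrightarrow> H (x + y) = H x + H y"
  and semilinear_scale: "semilinear t H \<Longrightarrow> H (c *s x) = t c *s H x"
  unfolding semilinear_def by auto

lemma semilinear_zero: "semilinear t H \<Longrightarrow> H 0 = 0"
  using semilinear_add[of t H 0 0] by (metis add.right_neutral add_left_cancel)

lemma semilinear_sum: "semilinear t H \<Longrightarrow> H (sum f A) = (\<Sum>i\<in>A. H (f i))"
  by (induction A rule: infinite_finite_induct) (auto simp: semilinear_zero semilinear_add)

lemma semilinear_diff: "semilinear t H \<Longrightarrow> H (x - y) = H x - H y"
  using semilinear_add[of t H "x - y" y] by (simp add: eq_diff_eq)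

lemma semilinear_lincomb:
  "semilinear t H \<Longrightarrow> H (\<Sum>i\<in>A. a i *s v i) = (\<Sum>i\<in>A. t (a i) *s H (v i))"
  by (simp add: semilinear_sum semilinear_scale)

lemma semilinear_image_O_span:
  assumes t: "OL_aut t" and H: "semilinear t H"
  shows "H ` O_span OL C = O_span OL (\<lambda>i. H (C i))"
proof
  show "H ` O_span OL C \<subseteq> O_span OL (\<lambda>i. H (C i))"
  proof
    fix y assume "y \<in> H ` O_span OL C"
    then obtain x where "x \<in> O_span OL C" "y = H x" by blast
    then obtain c where "\<And>i. c i \<in> OL" "y = H (\<Sum>i\<in>UNIV. c i *s C i)"
      by (metis O_span_memE)
    then show "y \<in> O_span OL (\<lambda>i. H (C i))"
      using OL_aut_OL_iff[OF t] by (intro O_span_memI[of "\<lambda>i. t (c i)"]) (auto simp: semilinear_lincomb[OF H])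
  qed
next
  show "O_span OL (\<lambda>i. H (C i)) \<subseteq> H ` O_span OL C"
  proof
    fix y assume "y \<in> O_span OL (\<lambda>i. H (C i))"
    then obtain d where d: "\<And>i. d i \<in> OL" "y = (\<Sum>i\<in>UNIV. d i *s H (C i))" by (metis O_span_memE)
    define x where "x = (\<Sum>i\<in>UNIV. inv t (d i) *s C i)"
    have "H x = y" unfolding x_def semilinear_lincomb[OF H] OL_aut_inv_apply[OF t] d(2) ..
    moreover have "x \<in> O_span OL C" unfolding x_def
      using d(1) OL_aut_OL_iff[OF OL_aut_inv[OF t]] by (intro O_span_memI) auto
    ultimately show "y \<in> H ` O_span OL C" by blast
  qed
qed

lemma semilinear_image_OL_submodule:
  assumes t: "OL_aut t" and H: "semilinear t H" and S: "OL_submodule S"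
  shows "OL_submodule (H ` S)"
  unfolding OL_submodule_def
proof (intro conjI ballI)
  show "0 \<in> H ` S" using semilinear_zero[OF H] OL_submodule_zero[OF S] by (metis image_eqI)
next
  fix a b assume "a \<in> H ` S" "b \<in> H ` S"
  then obtain z1 z2 where "z1 \<in> S" "z2 \<in> S" "a + b = H (z1 + z2)"
    by (auto simp: semilinear_add[OF H])
  then show "a + b \<in> H ` S" using OL_submodule_add[OF S] by blast
next
  fix c a assume "c \<in> OL" "a \<in> H ` S"
  then obtain z where z: "z \<in> S" "a = H z" by blast
  have "H (inv t c *s z) = c *s a" using semilinear_scale[OF H] OL_aut_inv_apply[OF t] z(2) by simp
  moreover have "inv t c *s z \<in> S"
    using \<open>c \<in> OL\<close> OL_aut_OL_iff[OF OL_aut_inv[OF t]] z(1) by (intro OL_submodule_scale[OF S]) auto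
  ultimately show "c *s a \<in> H ` S" by (metis image_eqI)
qed

definition scale_basis :: "'n set \<Rightarrow> ('n \<Rightarrow> 'L ^ 'n) \<Rightarrow> 'n \<Rightarrow> 'L ^ 'n" where
  "scale_basis S C i = (if i \<in> S then unif else 1) *s C i"

lemma inv_omega_iff:
  "inv_omega OL unif M N r \<longleftrightarrow>
     (\<exists>S B. card S = r \<and> lin_indep_fam B \<and> M = O_span OL B \<and> N = O_span OL (scale_basis S B))"
proof -
  have eq: "unif powi (if i \<in> S then 1 else 0) *s B i = scale_basis S B i" for S B i
    by (simp add: scale_basis_def)
  show ?thesis unfolding inv_omega_def has_inv_def eq by blast
qed

lemma O_span_scale_basis_subset: "O_span OL (scale_basis S C) \<subseteq> O_span OL C"
  by (rule O_span_mono) (auto simp: scale_basis_def intro: OL_submodule_scale[OF OL_submodule_O_span] O_span_basis_mem)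

lemma unif_scale_O_span_scale_basis:
  assumes "x \<in> O_span OL C"
  shows "unif *s x \<in> O_span OL (scale_basis S C)"
proof -
  let ?N = "O_span OL (scale_basis S C)"
  have basis: "unif *s C i \<in> ?N" for i
  proof -
    have "unif *s C i = (if i \<in> S then 1 else unif) *s scale_basis S C i"
      by (simp add: scale_basis_def)
    also have "\<dots> \<in> ?N" by (intro OL_submodule_scale[OF OL_submodule_O_span] O_span_basis_mem) simp
    finally show ?thesis .
  qed
  obtain c where c: "\<And>i. c i \<in> OL" "x = (\<Sum>i\<in>UNIV. c i *s C i)"
    using assms unfolding O_span_def by blast
  have "unif *s x = (\<Sum>i\<in>UNIV. c i *s (unif *s C i))"
    unfolding c(2) by (simp add: vec.scale_sum_right mult.commute)
  also have "\<dots> \<in> ?N"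
    by (rule OL_submodule_sum[OF OL_submodule_O_span], rule OL_submodule_scale[OF OL_submodule_O_span c(1) basis])
  finally show ?thesis .
qed

lemma inv_omega_sandwich:
  assumes "inv_omega OL unif M N r"
  shows "N \<subseteq> M" and "\<And>x. x \<in> M \<Longrightarrow> unif *s x \<in> N"
  using assms O_span_scale_basis_subset unif_scale_O_span_scale_basis unfolding inv_omega_iff
  by auto

text \<open>With V = verschiebung F we have F V = V F = unif, and a lattice \<Lambda> is stable under V iff
  unif \<Lambda> \<subseteq> F \<Lambda>.\<close>
definition verschiebung :: "('L ^ 'n \<Rightarrow> 'L ^ 'n) \<Rightarrow> 'L ^ 'n \<Rightarrow> 'L ^ 'n" where
  "verschiebung F x = unif *s inv F x"

context
  fixes t and F :: "'L ^ 'n \<Rightarrow> 'L ^ 'n"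
  assumes t: "OL_aut t" and F: "semilinear t F" and F_bij: "bij F"
begin

lemma verschiebung_apply: "verschiebung F (F x) = unif *s x"
  using F_bij by (simp add: verschiebung_def bij_is_inj)

lemma apply_verschiebung: "F (verschiebung F x) = unif *s x"
  using F_bij by (simp add: verschiebung_def semilinear_scale[OF F] OL_aut_unif[OF t] bij_is_surj
      surj_f_inv_f)

lemma semilinear_verschiebung: "semilinear (inv t) (verschiebung F)"
proof -
  have inv_F: "inv F (a + b) = inv F a + inv F b" "inv F (c *s a) = inv t c *s inv F a" for a b c
    using F_bij semilinear_add[OF F] semilinear_scale[OF F] OL_aut_inv_apply[OF t]
    by (metis bij_inv_eq_iff)+
  then show ?thesis
    unfolding semilinear_def verschiebung_def by (simp add: vec.scale_right_distrib mult.commute)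
qed

lemma verschiebung_mem_iff: "verschiebung F x \<in> \<Lambda> \<longleftrightarrow> unif *s x \<in> F ` \<Lambda>"
  using apply_verschiebung[of x] F_bij by (metis bij_is_inj image_iff inj_image_mem_iff)

lemma inv_omega_stable:
  assumes "inv_omega OL unif \<Lambda> (F ` \<Lambda>) r"
  shows "\<And>x. x \<in> \<Lambda> \<Longrightarrow> F x \<in> \<Lambda>" and "\<And>x. x \<in> \<Lambda> \<Longrightarrow> verschiebung F x \<in> \<Lambda>"
  using inv_omega_sandwich[OF assms] verschiebung_mem_iff by blast+

end

lemma lin_indep_fam_exchange:
  fixes C :: "'n \<Rightarrow> 'L ^ 'n"
  assumes C: "lin_indep_fam C" and \<nu>: "\<nu> \<noteq> 0" and v: "\<nu> *s v = (\<Sum>k\<in>UNIV. a k *s C k)"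
    and aj: "a j \<noteq> 0"
  shows "lin_indep_fam (C(j := v))"
  unfolding lin_indep_fam_def
proof (rule allI, rule impI)
  fix c assume c0: "(\<Sum>k\<in>UNIV. c k *s (C(j := v)) k) = 0"
  have upd: "(\<Sum>k\<in>UNIV. c k *s (C(j := v)) k) = c j *s v + (\<Sum>k\<in>UNIV - {j}. c k *s C k)"
  proof -
    have "(\<Sum>k\<in>UNIV. c k *s (C(j := v)) k)
        = c j *s (C(j := v)) j + (\<Sum>k\<in>UNIV - {j}. c k *s (C(j := v)) k)"
      by (rule sum.remove) auto
    also have "(\<Sum>k\<in>UNIV - {j}. c k *s (C(j := v)) k) = (\<Sum>k\<in>UNIV - {j}. c k *s C k)"
      by (rule sum.cong) auto
    finally show ?thesis by simp
  qed
  define coef where "coef k = c j * a k + (if k = j then 0 else \<nu> * c k)" for k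
  have "(\<Sum>k\<in>UNIV. coef k *s C k)
      = c j *s (\<Sum>k\<in>UNIV. a k *s C k) + (\<Sum>k\<in>UNIV. (if k = j then 0 else \<nu> * c k) *s C k)"
    unfolding coef_def by (simp add: vec.scale_left_distrib sum.distrib vec.scale_sum_right)
  also have "(\<Sum>k\<in>UNIV. (if k = j then 0 else \<nu> * c k) *s C k) = \<nu> *s (\<Sum>k\<in>UNIV - {j}. c k *s C k)"
    by (subst sum.remove[of UNIV j]) (auto intro!: sum.cong simp: vec.scale_sum_right)
  also have "c j *s (\<Sum>k\<in>UNIV. a k *s C k) + \<nu> *s (\<Sum>k\<in>UNIV - {j}. c k *s C k)
      = \<nu> *s (\<Sum>k\<in>UNIV. c k *s (C(j := v)) k)"
    unfolding upd v[symmetric] by (simp add: vec.scale_right_distrib mult.commute)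
  finally have coef0: "\<And>k. coef k = 0" using c0 C unfolding lin_indep_fam_def by simp
  then have "c j = 0" using coef0[of j] aj by (simp add: coef_def)
  show "\<forall>k. c k = 0"
  proof
    fix k show "c k = 0"
      using coef0[of k] \<open>c j = 0\<close> \<nu> by (cases "k = j") (auto simp: coef_def)
  qed
qed

lemma O_span_exchange:
  fixes C :: "'n \<Rightarrow> 'L ^ 'n"
  assumes v: "\<nu> *s v = (\<Sum>k\<in>UNIV. a k *s C k)" and \<nu>: "\<nu> \<in> OL"
    and a: "\<And>k. a k \<in> OL" and aj: "OL_unit (a j)"
  shows "C j \<in> O_span OL (C(j := v))"
proof -
  let ?C' = "C(j := v)"
  have "\<nu> *s v = a j *s C j + (\<Sum>k\<in>UNIV - {j}. a k *s C k)"
    unfolding v by (rule sum.remove) auto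
  then have aCj: "a j *s C j = \<nu> *s v - (\<Sum>k\<in>UNIV - {j}. a k *s C k)" by simp
  have "C j = (1 / a j) *s (a j *s C j)" using OL_unit_nonzero[OF aj] by simp
  also have "\<dots> = (\<nu> / a j) *s v - (\<Sum>k\<in>UNIV - {j}. (a k / a j) *s C k)"
    unfolding aCj vec.scale_right_diff_distrib by (simp add: vec.scale_sum_right)
  also have "\<dots> = (\<nu> / a j) *s ?C' j - (\<Sum>k\<in>UNIV - {j}. (a k / a j) *s ?C' k)"
  proof -
    have "(\<Sum>k\<in>UNIV - {j}. (a k / a j) *s ?C' k) = (\<Sum>k\<in>UNIV - {j}. (a k / a j) *s C k)"
      by (rule sum.cong) auto
    then show ?thesis by simp
  qed
  also have "\<dots> \<in> O_span OL ?C'"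
    using aj \<nu> a
    by (intro OL_submodule_diff[OF OL_submodule_O_span] OL_submodule_scale[OF OL_submodule_O_span]
        OL_submodule_sum[OF OL_submodule_O_span] O_span_basis_mem OL_divide_unit)
  finally show ?thesis .
qed

lemma unit_coeff_if_notin_O_span_scale_basis:
  fixes C :: "'n \<Rightarrow> 'L ^ 'n"
  assumes v: "v \<notin> O_span OL (scale_basis S C)" "v = (\<Sum>k\<in>UNIV. a k *s C k)"
    and a: "\<And>k. a k \<in> OL"
  shows "\<exists>j\<in>S. OL_unit (a j)"
proof (rule ccontr)
  assume no_unit: "\<not> ?thesis"
  have "a k / unif \<in> OL" if "k \<in> S" for k
  proof -
    have "\<not> OL_unit (a k)" using no_unit that by blast
    then show ?thesis using nonunit_max_ideal[OF a] by (simp add: max_ideal_iff)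
  qed
  then have "\<And>k. (if k \<in> S then a k / unif else a k) \<in> OL" using a by simp
  moreover have "v = (\<Sum>k\<in>UNIV. (if k \<in> S then a k / unif else a k) *s scale_basis S C k)"
    unfolding v(2) scale_basis_def by (rule sum.cong) auto
  ultimately have "v \<in> O_span OL (scale_basis S C)" by (rule O_span_memI)
  then show False using v(1) by contradiction
qed

lemma adapted_basis_step:
  fixes C :: "'n \<Rightarrow> 'L ^ 'n"
  assumes C: "lin_indep_fam C" and N: "OL_submodule N" "N \<subseteq> O_span OL C"
    and G: "\<And>i. i \<in> G \<Longrightarrow> C i \<in> N"
    and v: "v \<in> N" "v \<notin> O_span OL (scale_basis (- G) C)"
  obtains j C' where "j \<notin> G" "lin_indep_fam C'" "O_span OL C' = O_span OL C"
    "\<And>i. i \<in> insert j G \<Longrightarrow> C' i \<in> N"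
proof -
  have "v \<in> O_span OL C" using v(1) N(2) by blast
  then obtain a where a: "\<And>k. a k \<in> OL" and va: "v = (\<Sum>k\<in>UNIV. a k *s C k)"
    unfolding O_span_def by blast
  have "\<exists>j\<in>- G. OL_unit (a j)"
    by (rule unit_coeff_if_notin_O_span_scale_basis[OF v(2) va a])
  then obtain j where j: "j \<notin> G" "OL_unit (a j)" by blast
  \<comment> \<open>dropping the components along C i, i \<in> G, keeps v' in N\<close>
  define a' where "a' k = (if k \<in> G then 0 else a k)" for k
  define v' where "v' = (\<Sum>k\<in>UNIV. a' k *s C k)"
  have "v' = v - (\<Sum>k\<in>UNIV. (if k \<in> G then a k else 0) *s C k)"
    unfolding v'_def va a'_def sum_subtractf[symmetric] by (rule sum.cong) auto
  moreover have "(\<Sum>k\<in>UNIV. (if k \<in> G then a k else 0) *s C k) \<in> N"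
    using G a OL_submodule_zero[OF N(1)]
    by (intro OL_submodule_sum[OF N(1)]) (auto intro: OL_submodule_scale[OF N(1)])
  ultimately have v'N: "v' \<in> N" using v(1) OL_submodule_diff[OF N(1)] by simp
  have v': "1 *s v' = (\<Sum>k\<in>UNIV. a' k *s C k)" "\<And>k. a' k \<in> OL" "OL_unit (a' j)"
    using a j by (simp_all add: v'_def a'_def)
  define C' where "C' = C(j := v')"
  have "lin_indep_fam C'"
    unfolding C'_def using lin_indep_fam_exchange[OF C _ v'(1)] OL_unit_nonzero[OF v'(3)] by simp
  moreover have "O_span OL C' = O_span OL C"
  proof
    show "O_span OL C' \<subseteq> O_span OL C"
      using v'N N(2) O_span_basis_mem[of C] unfolding C'_def by (intro O_span_mono) auto
    show "O_span OL C \<subseteq> O_span OL C'"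
    proof (rule O_span_mono)
      fix i show "C i \<in> O_span OL C'"
        using O_span_exchange[OF v'(1) OL_one v'(2,3)] O_span_basis_mem[of C' i]
        unfolding C'_def by (cases "i = j") auto
    qed
  qed
  moreover have "\<And>i. i \<in> insert j G \<Longrightarrow> C' i \<in> N" using v'N G unfolding C'_def by auto
  ultimately show thesis using j(1) that by blast
qed

text \<open>Elementary divisors for a module N with unif \<Lambda> \<subseteq> N \<subseteq> \<Lambda>: the basis is improved one vector
  at a time, G collecting the indices of basis vectors already known to lie in N.\<close>
lemma adapted_basis:
  fixes C :: "'n \<Rightarrow> 'L ^ 'n"
  assumes C: "lin_indep_fam C" and N: "OL_submodule N" "N \<subseteq> O_span OL C"
    and unif_N: "\<And>x. x \<in> O_span OL C \<Longrightarrow> unif *s x \<in> N"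
  obtains C' S where "lin_indep_fam C'" "O_span OL C' = O_span OL C"
    "N = O_span OL (scale_basis S C')"
proof -
  have "\<exists>C' S. lin_indep_fam C' \<and> O_span OL C' = O_span OL C \<and> N = O_span OL (scale_basis S C')"
    if "lin_indep_fam D" "O_span OL D = O_span OL C" "\<And>i. i \<in> G \<Longrightarrow> D i \<in> N"
      "card (- G) = m" for D G m
    using that
  proof (induction m arbitrary: D G rule: less_induct)
    case (less m D G)
    have "O_span OL (scale_basis (- G) D) \<subseteq> N"
    proof (rule O_span_least[OF N(1)])
      fix i show "scale_basis (- G) D i \<in> N"
        using less.prems(3) unif_N O_span_basis_mem[of D i] less.prems(2)
        by (cases "i \<in> G") (auto simp: scale_basis_def)
    qed
    show ?case
    proof (cases "N \<subseteq> O_span OL (scale_basis (- G) D)")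
      case True
      then show ?thesis
        using \<open>O_span OL (scale_basis (- G) D) \<subseteq> N\<close> less.prems(1,2) by blast
    next
      case False
      then obtain v where "v \<in> N" "v \<notin> O_span OL (scale_basis (- G) D)" by blast
      then obtain j D' where j: "j \<notin> G" and D': "lin_indep_fam D'"
          "O_span OL D' = O_span OL D" "\<And>i. i \<in> insert j G \<Longrightarrow> D' i \<in> N"
        using adapted_basis_step[OF less.prems(1) N(1) _ less.prems(3)] N(2) less.prems(2) by blast
      have "card (- insert j G) < card (- G)"
        using j by (intro psubset_card_mono) auto
      then have "card (- insert j G) < m" using less.prems(4) by simp
      from less.IH[OF this D'(1) _ D'(3) refl] show ?thesis using D'(2) less.prems(2) by simp
    qed
  qed
  from this[OF C refl, of "{}"] show thesis using that by auto
qed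

definition adjoin_line :: "('L ^ 'n) set \<Rightarrow> 'L ^ 'n \<Rightarrow> ('L ^ 'n) set" where
  "adjoin_line P x = {y + c *s x | y c. y \<in> P \<and> c \<in> OL}"

lemma adjoin_lineI: "y \<in> P \<Longrightarrow> c \<in> OL \<Longrightarrow> y + c *s x \<in> adjoin_line P x"
  unfolding adjoin_line_def by blast

lemma subset_adjoin_line: "OL_submodule P \<Longrightarrow> P \<subseteq> adjoin_line P x"
  using adjoin_lineI[of _ P 0 x] by auto

lemma mem_adjoin_line_self: "OL_submodule P \<Longrightarrow> x \<in> adjoin_line P x"
  using adjoin_lineI[OF OL_submodule_zero OL_one, of P x] by simp

lemma mem_adjoin_line_if_diff: "H - x \<in> P \<Longrightarrow> H \<in> adjoin_line P x"
  using adjoin_lineI[of "H - x" P 1 x] by simp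

lemma OL_submodule_adjoin_line:
  assumes P: "OL_submodule P"
  shows "OL_submodule (adjoin_line P x)"
  unfolding OL_submodule_def
proof (intro conjI ballI)
  show "0 \<in> adjoin_line P x" using subset_adjoin_line[OF P] OL_submodule_zero[OF P] by blast
next
  fix a b assume "a \<in> adjoin_line P x" "b \<in> adjoin_line P x"
  then obtain y1 c1 y2 c2 where "a = y1 + c1 *s x" "b = y2 + c2 *s x" "y1 \<in> P" "y2 \<in> P"
    "c1 \<in> OL" "c2 \<in> OL"
    unfolding adjoin_line_def by blast
  then have "a + b = (y1 + y2) + (c1 + c2) *s x" "y1 + y2 \<in> P" "c1 + c2 \<in> OL"
    using OL_submodule_add[OF P] by (auto simp: algebra_simps vec.scale_left_distrib)
  then show "a + b \<in> adjoin_line P x" using adjoin_lineI[of "y1 + y2" P "c1 + c2" x] by simp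
next
  fix c a assume "c \<in> OL" "a \<in> adjoin_line P x"
  then obtain y1 c1 where "a = y1 + c1 *s x" "y1 \<in> P" "c1 \<in> OL" unfolding adjoin_line_def by blast
  then have "c *s a = c *s y1 + (c * c1) *s x" "c *s y1 \<in> P" "c * c1 \<in> OL"
    using OL_submodule_scale[OF P] \<open>c \<in> OL\<close> by (auto simp: vec.scale_right_distrib)
  then show "c *s a \<in> adjoin_line P x" using adjoin_lineI[of "c *s y1" P "c * c1" x] by simp
qed

lemma semilinear_image_adjoin_line:
  assumes t: "OL_aut t" and H: "semilinear t H" and P: "OL_submodule P"
    and H_P: "\<And>y. y \<in> P \<Longrightarrow> H y \<in> P" and H_x: "H x \<in> adjoin_line P x"
  shows "H ` adjoin_line P x \<subseteq> adjoin_line P x"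
proof (rule image_subsetI)
  fix z assume "z \<in> adjoin_line P x"
  then obtain y c where "z = y + c *s x" "y \<in> P" "c \<in> OL" unfolding adjoin_line_def by blast
  then have "H z = H y + t c *s H x" "H y \<in> adjoin_line P x" "t c \<in> OL"
    using H_P subset_adjoin_line[OF P] OL_aut_OL_iff[OF t]
    by (auto simp: semilinear_add[OF H] semilinear_scale[OF H])
  then show "H z \<in> adjoin_line P x"
    using OL_submodule_add[OF OL_submodule_adjoin_line[OF P]]
      OL_submodule_scale[OF OL_submodule_adjoin_line[OF P] _ H_x] by simp
qed

lemma adjoin_line_subset:
  assumes "OL_submodule Q" "P \<subseteq> Q" "x \<in> Q"
  shows "adjoin_line P x \<subseteq> Q"
proof
  fix z assume "z \<in> adjoin_line P x"
  then obtain y c where "z = y + c *s x" "y \<in> P" "c \<in> OL" unfolding adjoin_line_def by blast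
  then show "z \<in> Q" using assms OL_submodule_add OL_submodule_scale by blast
qed

lemma quot_dim_one_adjoin_line:
  "OL_submodule P \<Longrightarrow> x \<notin> P \<Longrightarrow> quot_dim_one OL (adjoin_line P x) P"
  unfolding quot_dim_one_def using mem_adjoin_line_self[of P x]
  by (intro bexI[of _ x]) (auto simp: adjoin_line_def)

lemma O_span_exchange_eq_adjoin_line:
  fixes B :: "'n \<Rightarrow> 'L ^ 'n"
  assumes ux: "unif *s x = (\<Sum>k\<in>UNIV. a k *s B k)" and a: "\<And>k. a k \<in> OL" "OL_unit (a j)"
  shows "O_span OL (B(j := x)) = adjoin_line (O_span OL B) x"
proof
  let ?C = "B(j := x)"
  have "O_span OL B \<subseteq> O_span OL ?C"
  proof (rule O_span_mono)
    fix i show "B i \<in> O_span OL ?C"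
      using O_span_exchange[OF ux unif_OL a] O_span_basis_mem[of ?C i] by (cases "i = j") auto
  qed
  moreover have "x \<in> O_span OL ?C" using O_span_basis_mem[of ?C j] by simp
  ultimately show "adjoin_line (O_span OL B) x \<subseteq> O_span OL ?C"
    by (rule adjoin_line_subset[OF OL_submodule_O_span])
  show "O_span OL ?C \<subseteq> adjoin_line (O_span OL B) x"
  proof (rule O_span_least[OF OL_submodule_adjoin_line[OF OL_submodule_O_span]])
    fix i show "?C i \<in> adjoin_line (O_span OL B) x"
      using mem_adjoin_line_self[OF OL_submodule_O_span[of B], of x]
        subset_adjoin_line[OF OL_submodule_O_span[of B], of x] O_span_basis_mem[of B i]
      by (cases "i = j") auto
  qed
qed

lemma adjoin_line_basis:
  fixes B :: "'n \<Rightarrow> 'L ^ 'n"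
  assumes B: "lin_indep_fam B" and x: "x \<notin> O_span OL B" "unif *s x \<in> O_span OL B"
  obtains C where "lin_indep_fam C" "adjoin_line (O_span OL B) x = O_span OL C"
proof -
  obtain a where a: "\<And>k. a k \<in> OL" and ux: "unif *s x = (\<Sum>k\<in>UNIV. a k *s B k)"
    using x(2) unfolding O_span_def by blast
  have "unif *s x \<notin> O_span OL (scale_basis UNIV B)"
  proof
    assume "unif *s x \<in> O_span OL (scale_basis UNIV B)"
    then obtain c where c: "\<And>k. c k \<in> OL" "unif *s x = (\<Sum>k\<in>UNIV. c k *s (unif *s B k))"
      unfolding O_span_def scale_basis_def by auto
    then have "unif *s x = unif *s (\<Sum>k\<in>UNIV. c k *s B k)"
      by (simp add: vec.scale_sum_right mult.commute)
    then have "x = (\<Sum>k\<in>UNIV. c k *s B k)" by simp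
    then show False using x(1) c(1) O_span_memI by blast
  qed
  then obtain j where aj: "OL_unit (a j)"
    using unit_coeff_if_notin_O_span_scale_basis[OF _ ux a] by blast
  have "lin_indep_fam (B(j := x))"
    by (rule lin_indep_fam_exchange[OF B unif_nonzero ux OL_unit_nonzero[OF aj]])
  then show thesis by (rule that[OF _ O_span_exchange_eq_adjoin_line[OF ux a aj, symmetric]])
qed

end

section \<open>The index of a semilinear map\<close>

definition basis_mat :: "('n::finite \<Rightarrow> 'a ^ 'n) \<Rightarrow> 'a ^ 'n ^ 'n" where
  "basis_mat C = (\<chi> i. C i)"

lemma basis_mat_nth [simp]: "basis_mat C $ i $ j = C i $ j"
  by (simp add: basis_mat_def)

lemma det_basis_mat_nonzero:
  fixes C :: "'n::finite \<Rightarrow> 'a::field ^ 'n"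
  assumes "lin_indep_fam C"
  shows "det (basis_mat C) \<noteq> 0"
proof -
  have "row i (basis_mat C) = C i" for i by (simp add: row_def basis_mat_def vec_eq_iff)
  then have "\<exists>B. basis_mat C ** B = mat 1"
    using assms unfolding matrix_right_invertible_independent_rows lin_indep_fam_def by simp
  then show ?thesis using invertible_right_inverse invertible_det_nz by blast
qed

lemma basis_mat_lincomb: "basis_mat (\<lambda>i. \<Sum>j\<in>UNIV. U $ i $ j *s C j) = U ** basis_mat C"
  by (simp add: basis_mat_def matrix_matrix_mult_def vec_eq_iff)

lemma det_basis_mat_scale:
  fixes C :: "'n::finite \<Rightarrow> 'a::comm_ring_1 ^ 'n"
  shows "det (basis_mat (\<lambda>i. d i *s C i)) = (\<Prod>i\<in>UNIV. d i) * det (basis_mat C)"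
proof -
  define D where "D = (\<chi> i j. if i = j then d i else 0)"
  have "(\<Sum>j\<in>UNIV. D $ i $ j *s C j) = d i *s C i" for i
    by (simp add: D_def if_distrib[of "\<lambda>c. c *s _"] cong: if_cong)
  then have "basis_mat (\<lambda>i. d i *s C i) = D ** basis_mat C"
    using basis_mat_lincomb[of D C] by simp
  moreover have "det D = (\<Prod>i\<in>UNIV. d i)"
    by (subst det_diagonal) (auto simp: D_def)
  ultimately show ?thesis by (simp add: det_mul)
qed

context discrete_valuation_ring
begin

lemma det_scale_basis: "det (basis_mat (scale_basis S C)) = unif ^ card S * det (basis_mat C)"
proof -
  have "(\<Prod>i\<in>UNIV. if i \<in> S then unif else 1) = unif ^ card S"
    by (simp add: prod.If_cases)
  then show ?thesis
    using det_basis_mat_scale[of "\<lambda>i. if i \<in> S then unif else 1" C]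
    by (simp add: scale_basis_def[abs_def])
qed

lemma det_OL: "(\<And>i j. U $ i $ j \<in> OL) \<Longrightarrow> det U \<in> OL"
  unfolding det_def
proof (intro OL_sum OL_mult OL_prod)
  fix p :: "'a \<Rightarrow> 'a"
  show "of_int (sign p) \<in> OL" by (cases p rule: sign_cases) (auto intro: OL_minus)
qed

lemma O_span_subset_coords:
  fixes C D :: "'n \<Rightarrow> 'L ^ 'n"
  assumes "O_span OL D \<subseteq> O_span OL C"
  shows "\<exists>U. (\<forall>i j. U $ i $ j \<in> OL) \<and> basis_mat D = U ** basis_mat C"
proof -
  have "D i \<in> O_span OL C" for i using assms O_span_basis_mem[of D i] by blast
  then have "\<forall>i. \<exists>c. (\<forall>j. c j \<in> OL) \<and> D i = (\<Sum>j\<in>UNIV. c j *s C j)"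
    unfolding O_span_def by blast
  then obtain c where c: "\<And>i j. c i j \<in> OL" "\<And>i. D i = (\<Sum>j\<in>UNIV. c i j *s C j)"
    by metis
  then have "basis_mat D = (\<chi> i j. c i j) ** basis_mat C"
    using basis_mat_lincomb[of "\<chi> i j. c i j" C] by (simp add: basis_mat_def)
  with c(1) show ?thesis by (intro exI[of _ "\<chi> i j. c i j"]) auto
qed

text \<open>Two bases of the same lattice differ by a matrix in GL_n(OL).\<close>
lemma O_span_eq_det_ratio_unit:
  fixes C D :: "'n \<Rightarrow> 'L ^ 'n"
  assumes eq: "O_span OL C = O_span OL D" and nz: "det (basis_mat C) \<noteq> 0"
  shows "OL_unit (det (basis_mat D) / det (basis_mat C))"
proof -
  obtain U where U: "\<And>i j. U $ i $ j \<in> OL" "basis_mat D = U ** basis_mat C"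
    using eq O_span_subset_coords[of D C] by auto
  obtain V where V: "\<And>i j. V $ i $ j \<in> OL" "basis_mat C = V ** basis_mat D"
    using eq O_span_subset_coords[of C D] by auto
  have "det (basis_mat C) = det (V ** (U ** basis_mat C))" using V(2) U(2) by simp
  then have "det (basis_mat C) = det V * det U * det (basis_mat C)" by (simp add: det_mul)
  then have "det U * det V = 1" using nz by (simp add: mult.commute)
  then have "inverse (det U) = det V" by (rule inverse_unique)
  then have "OL_unit (det U)"
    using det_OL[OF U(1)] det_OL[OF V(1)] \<open>det U * det V = 1\<close> unfolding OL_unit_def by auto
  moreover have "det (basis_mat D) / det (basis_mat C) = det U" using U(2) nz by (simp add: det_mul)
  ultimately show ?thesis by simp
qed

lemma det_basis_mat_semilinear_image:
  fixes H :: "'L ^ 'n \<Rightarrow> 'L ^ 'n"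
  assumes t: "OL_aut t" and H: "semilinear t H"
  shows "det (basis_mat (\<lambda>i. H (C i))) = t (det (basis_mat C)) * det (basis_mat (\<lambda>j. H (axis j 1)))"
proof -
  let ?T = "\<chi> i j. t (C i $ j)"
  have "H (C i) = (\<Sum>j\<in>UNIV. ?T $ i $ j *s H (axis j 1))" for i
    using semilinear_lincomb[OF H, of "\<lambda>j. C i $ j" "\<lambda>j. axis j 1" UNIV] basis_expansion[of "C i"]
    by simp
  then have "basis_mat (\<lambda>i. H (C i)) = ?T ** basis_mat (\<lambda>j. H (axis j 1))"
    using basis_mat_lincomb[of ?T "\<lambda>j. H (axis j 1)"] by simp
  moreover have "det ?T = t (det (basis_mat C))"
    unfolding det_def by (simp add: OL_aut_sum[OF t] OL_aut_mult[OF t] OL_aut_prod[OF t]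
        OL_aut_of_int_sign[OF t])
  ultimately show ?thesis by (simp add: det_mul)
qed

text \<open>If H \<Lambda> has elementary divisors (unif^(card S), 1, ...) relative to \<Lambda>, then unif^(card S)
  is det H up to a unit: the lattice only enters through t d / d, d the determinant of a basis.\<close>
lemma unif_power_card_eq_det:
  fixes H :: "'L ^ 'n \<Rightarrow> 'L ^ 'n"
  assumes t: "OL_aut t" and H: "semilinear t H" and C: "lin_indep_fam C"
    and image: "H ` O_span OL C = O_span OL (scale_basis S C)"
  obtains u where "OL_unit u" "unif ^ card S = u * det (basis_mat (\<lambda>j. H (axis j 1)))"
proof -
  define d where "d = det (basis_mat C)"
  define \<delta> where "\<delta> = det (basis_mat (\<lambda>j. H (axis j 1)))"
  have d: "d \<noteq> 0" unfolding d_def by (rule det_basis_mat_nonzero[OF C])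
  have "O_span OL (scale_basis S C) = O_span OL (\<lambda>i. H (C i))"
    using image semilinear_image_O_span[OF t H, of C] by (rule subst)
  moreover have "det (basis_mat (scale_basis S C)) \<noteq> 0"
    using d unfolding det_scale_basis d_def by simp
  ultimately have "OL_unit (det (basis_mat (\<lambda>i. H (C i))) / det (basis_mat (scale_basis S C)))"
    by (rule O_span_eq_det_ratio_unit)
  moreover have "det (basis_mat (\<lambda>i. H (C i))) = t d * \<delta>"
    unfolding d_def \<delta>_def by (rule det_basis_mat_semilinear_image[OF t H])
  moreover have "det (basis_mat (scale_basis S C)) = unif ^ card S * d"
    unfolding d_def by (rule det_scale_basis)
  ultimately have x: "OL_unit (t d * \<delta> / (unif ^ card S * d))" by simp
  have r: "OL_unit (t d / d)" by (rule OL_aut_ratio_unit[OF t d])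
  have field_eq: "p = (a / d) / (a * \<delta> / (p * d)) * \<delta>"
    if "a \<noteq> 0" "\<delta> \<noteq> 0" "d \<noteq> 0" "p \<noteq> 0" for a \<delta> d p :: 'L
    using that by (simp add: field_simps)
  have "unif ^ card S = (t d / d) / (t d * \<delta> / (unif ^ card S * d)) * \<delta>"
    using OL_unit_nonzero[OF x] d by (intro field_eq) auto
  moreover have "OL_unit ((t d / d) / (t d * \<delta> / (unif ^ card S * d)))"
    using r x by (rule OL_unit_divide)
  ultimately show thesis using that unfolding \<delta>_def by blast
qed

lemma card_scale_basis_unique:
  fixes H :: "'L ^ 'n \<Rightarrow> 'L ^ 'n"
  assumes t: "OL_aut t" and H: "semilinear t H"
    and C1: "lin_indep_fam C1" "H ` O_span OL C1 = O_span OL (scale_basis S1 C1)"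
    and C2: "lin_indep_fam C2" "H ` O_span OL C2 = O_span OL (scale_basis S2 C2)"
  shows "card S1 = card S2"
proof -
  obtain u1 where u1: "OL_unit u1" "unif ^ card S1 = u1 * det (basis_mat (\<lambda>j. H (axis j 1)))"
    using unif_power_card_eq_det[OF t H C1] .
  obtain u2 where u2: "OL_unit u2" "unif ^ card S2 = u2 * det (basis_mat (\<lambda>j. H (axis j 1)))"
    using unif_power_card_eq_det[OF t H C2] .
  have "det (basis_mat (\<lambda>j. H (axis j 1))) \<noteq> 0"
    using u1(2) by (metis mult_zero_right power_not_zero unif_nonzero)
  then have "unif ^ card S1 / unif ^ card S2 = u1 / u2"
    unfolding u1(2) u2(2) by simp
  then have "OL_unit (unif ^ card S1 / unif ^ card S2)" using u1(1) u2(1) by (simp add: OL_unit_divide)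
  then show ?thesis by (rule unif_power_unit_ratio)
qed

lemma inv_omega_transfer:
  fixes H :: "'L ^ 'n \<Rightarrow> 'L ^ 'n"
  assumes t: "OL_aut t" and H: "semilinear t H" and M: "inv_omega OL unif M (H ` M) r"
    and C: "lin_indep_fam C" and \<Lambda>: "\<Lambda> = O_span OL C"
    and sandwich: "H ` \<Lambda> \<subseteq> \<Lambda>" "\<And>x. x \<in> \<Lambda> \<Longrightarrow> unif *s x \<in> H ` \<Lambda>"
  shows "inv_omega OL unif \<Lambda> (H ` \<Lambda>) r"
proof -
  have "OL_submodule (H ` \<Lambda>)"
    unfolding \<Lambda> by (rule semilinear_image_OL_submodule[OF t H OL_submodule_O_span])
  moreover note sandwich[unfolded \<Lambda>]
  ultimately obtain C' S where C': "lin_indep_fam C'" "O_span OL C' = \<Lambda>"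
      and image: "H ` \<Lambda> = O_span OL (scale_basis S C')"
    using adapted_basis[OF C] unfolding \<Lambda> by blast
  obtain S0 B where "card S0 = r" "lin_indep_fam B" "M = O_span OL B"
      "H ` M = O_span OL (scale_basis S0 B)"
    using M unfolding inv_omega_iff by blast
  then have "card S = r"
    using card_scale_basis_unique[OF t H C'(1) _ \<open>lin_indep_fam B\<close>] image C'(2) by simp
  then show ?thesis unfolding inv_omega_iff using C' image by blast
qed


lemma inv_omega_adjoin_line:
  fixes F :: "'L ^ 'n \<Rightarrow> 'L ^ 'n"
  assumes t: "OL_aut t" and F: "semilinear t F" "bij F"
    and M: "inv_omega OL unif M (F ` M) r"
    and B: "lin_indep_fam B" and M': "M' = O_span OL B"
    and stable: "\<And>y. y \<in> M' \<Longrightarrow> F y \<in> M'" "\<And>y. y \<in> M' \<Longrightarrow> verschiebung F y \<in> M'"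
    and x: "x \<notin> M'" "unif *s x \<in> M'"
    and line: "F x \<in> adjoin_line M' x" "verschiebung F x \<in> adjoin_line M' x"
  shows "is_lattice OL (adjoin_line M' x)"
    and "inv_omega OL unif (adjoin_line M' x) (F ` adjoin_line M' x) r"
proof -
  obtain C where C: "lin_indep_fam C" "adjoin_line M' x = O_span OL C"
    using adjoin_line_basis[OF B] x unfolding M' by blast
  then show "is_lattice OL (adjoin_line M' x)" unfolding is_lattice_def by blast
  have P: "OL_submodule M'" unfolding M' by (rule OL_submodule_O_span)
  have "F ` adjoin_line M' x \<subseteq> adjoin_line M' x"
    by (rule semilinear_image_adjoin_line[OF t F(1) P stable(1) line(1)])
  moreover have "verschiebung F ` adjoin_line M' x \<subseteq> adjoin_line M' x"
    by (rule semilinear_image_adjoin_line[OF OL_aut_inv[OF t] semilinear_verschiebung[OF t F] P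
          stable(2) line(2)])
  ultimately show "inv_omega OL unif (adjoin_line M' x) (F ` adjoin_line M' x) r"
    using verschiebung_mem_iff[OF t F] by (intro inv_omega_transfer[OF t F(1) M C]) blast+
qed

end

section \<open>Fixed vectors of semilinear maps modulo a lattice\<close>

lemma lin_dependent_Suc_card:
  fixes u :: "nat \<Rightarrow> 'a::field ^ 'n::finite"
  shows "\<exists>c. (\<exists>i\<le>CARD('n). c i \<noteq> 0) \<and> (\<Sum>i\<le>CARD('n). c i *s u i) = 0"
proof (cases "inj_on u {..CARD('n)}")
  case False
  then obtain i j where ij: "i \<le> CARD('n)" "j \<le> CARD('n)" "i \<noteq> j" "u i = u j"
    unfolding inj_on_def by auto
  define c where "c k = (if k = i then 1 else if k = j then -1 else (0::'a))" for k
  have "(\<Sum>k\<le>CARD('n). c k *s u k) = (\<Sum>k\<in>{i,j}. c k *s u k)"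
    by (rule sum.mono_neutral_right) (use ij in \<open>auto simp: c_def\<close>)
  also have "\<dots> = 0" using ij by (simp add: c_def)
  finally show ?thesis using ij by (intro exI[of _ c]) (auto simp: c_def)
next
  case True
  let ?U = "u ` {..CARD('n)}"
  have "card ?U = Suc CARD('n)" using True by (simp add: card_image)
  then have "\<not> vec.independent ?U"
    using vec.independent_card_le_dim[of ?U UNIV] vec.dim_UNIV by (auto simp: card_cart_basis)
  then obtain c where c: "(\<Sum>v\<in>?U. c v *s v) = 0" "\<exists>v\<in>?U. c v \<noteq> 0"
    unfolding vec.independent_explicit by auto
  have "(\<Sum>i\<le>CARD('n). c (u i) *s u i) = (\<Sum>v\<in>?U. c v *s v)"
    using sum.reindex[OF True, of "\<lambda>v. c v *s v"] by simp
  then show ?thesis using c by (intro exI[of _ "\<lambda>i. c (u i)"]) auto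
qed

context discrete_valuation_ring
begin

lemma OL_lin_dependent:
  fixes u :: "nat \<Rightarrow> 'L ^ 'n"
  shows "\<exists>a. (\<forall>i\<le>CARD('n). a i \<in> OL) \<and> (\<exists>i\<le>CARD('n). OL_unit (a i))
    \<and> (\<Sum>i\<le>CARD('n). a i *s u i) = 0"
proof -
  obtain c i0 where c: "i0 \<le> CARD('n)" "c i0 \<noteq> 0" "(\<Sum>i\<le>CARD('n). c i *s u i) = 0"
    using lin_dependent_Suc_card[of u] by blast
  obtain j where j: "j \<le> CARD('n)" "c j \<noteq> 0" "\<forall>i\<le>CARD('n). c i / c j \<in> OL"
    using exists_coeff_dividing_all[of "{..CARD('n)}" i0 c] c by auto
  have "(\<Sum>i\<le>CARD('n). (c i / c j) *s u i) = (1 / c j) *s (\<Sum>i\<le>CARD('n). c i *s u i)"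
    by (simp add: vec.scale_sum_right)
  also have "\<dots> = 0" using c by simp
  finally show ?thesis using j by (intro exI[of _ "\<lambda>i. c i / c j"]) auto
qed

definition adjoin_seq :: "('L ^ 'n) set \<Rightarrow> (nat \<Rightarrow> 'L ^ 'n) \<Rightarrow> nat \<Rightarrow> ('L ^ 'n) set" where
  "adjoin_seq P u m = {p + (\<Sum>i<m. a i *s u i) | p a. p \<in> P \<and> (\<forall>i<m. a i \<in> OL)}"

lemma adjoin_seqI: "p \<in> P \<Longrightarrow> (\<And>i. i < m \<Longrightarrow> a i \<in> OL) \<Longrightarrow> p + (\<Sum>i<m. a i *s u i) \<in> adjoin_seq P u m"
  unfolding adjoin_seq_def by blast

text \<open>In a linear relation among u 0, ..., u n with unit coefficients, solve for the unit
  coefficient of largest index; later coefficients lie in the maximal ideal and are absorbed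
  into P.\<close>
lemma exists_adjoin_seq_relation:
  fixes u :: "nat \<Rightarrow> 'L ^ 'n"
  assumes P: "OL_submodule P" and unif_u: "\<And>i. unif *s u i \<in> P"
  shows "\<exists>m. u m \<in> adjoin_seq P u m"
proof -
  obtain a where a: "\<forall>i\<le>CARD('n). a i \<in> OL" "\<exists>i\<le>CARD('n). OL_unit (a i)"
      "(\<Sum>i\<le>CARD('n). a i *s u i) = 0"
    using OL_lin_dependent[of u] by blast
  define m where "m = (GREATEST i. i \<le> CARD('n) \<and> OL_unit (a i))"
  have m: "m \<le> CARD('n)" "OL_unit (a m)"
    using GreatestI_nat[of "\<lambda>i. i \<le> CARD('n) \<and> OL_unit (a i)" _ "CARD('n)"] a(2)
    unfolding m_def by auto
  have later: "a i \<in> max_ideal" if "m < i" "i \<le> CARD('n)" for i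
  proof -
    have "\<not> OL_unit (a i)"
      using Greatest_le_nat[of "\<lambda>i. i \<le> CARD('n) \<and> OL_unit (a i)" i "CARD('n)"] that
      unfolding m_def by auto
    then show ?thesis using a(1) that nonunit_max_ideal by auto
  qed
  have split: "{..CARD('n)} = {..<m} \<union> {m} \<union> {m<..CARD('n)}" using m(1) by auto
  define R where "R = (\<Sum>i\<in>{m<..CARD('n)}. a i *s u i)"
  have "(\<Sum>i\<le>CARD('n). a i *s u i) = (\<Sum>i<m. a i *s u i) + a m *s u m + R"
    unfolding split R_def by (subst sum.union_disjoint; auto)+
  then have am: "a m *s u m = - R - (\<Sum>i<m. a i *s u i)"
    using a(3) by (simp add: algebra_simps eq_neg_iff_add_eq_0)
  have "u m = (1 / a m) *s (a m *s u m)" using OL_unit_nonzero[OF m(2)] by simp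
  also have "\<dots> = (1 / a m) *s (- R) + (\<Sum>i<m. (- a i / a m) *s u i)"
    unfolding am by (simp add: vec.scale_right_diff_distrib vec.scale_sum_right sum_negf)
  finally have um: "u m = (1 / a m) *s (- R) + (\<Sum>i<m. (- a i / a m) *s u i)" .
  have "- R \<in> P"
    unfolding R_def using later
    by (intro OL_submodule_neg[OF P] OL_submodule_sum[OF P] OL_submodule_scale_max_ideal[OF P unif_u])
      auto
  then have "(1 / a m) *s (- R) \<in> P"
    using OL_unit_inverse_OL[OF m(2)] by (intro OL_submodule_scale[OF P]) (simp_all add: divide_inverse)
  moreover have "- a i / a m \<in> OL" if "i < m" for i
    using that m(1) a(1) by (intro OL_divide_unit[OF _ m(2)] OL_minus) simp
  ultimately have "u m \<in> adjoin_seq P u m"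
    unfolding um by (rule adjoin_seqI)
  then show ?thesis by blast
qed

lemma minimal_relation_unit_coeff:
  fixes H :: "'L ^ 'n \<Rightarrow> 'L ^ 'n"
  assumes t: "OL_aut t" and H: "semilinear t H" and P: "OL_submodule P" and Q: "OL_submodule Q"
    and u_Q: "\<And>i. u i \<in> Q" and unif_Q: "\<And>x. x \<in> Q \<Longrightarrow> unif *s x \<in> P"
    and u_Suc: "\<And>i. u (Suc i) = H (u i)" and inj: "\<And>x. x \<in> Q \<Longrightarrow> H x \<in> P \<Longrightarrow> x \<in> P"
    and rel: "u (Suc e) = p0 + (\<Sum>i<Suc e. c i *s u i)" "p0 \<in> P" "\<And>i. i < Suc e \<Longrightarrow> c i \<in> OL"
    and minimal: "u e \<notin> adjoin_seq P u e"
  shows "OL_unit (c 0)"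
proof (rule ccontr)
  assume "\<not> OL_unit (c 0)"
  then have c0: "c 0 \<in> max_ideal" using rel(3)[of 0] nonunit_max_ideal by auto
  have inv_t_OL: "inv t x \<in> OL" if "x \<in> OL" for x
    using OL_aut_OL_iff[OF OL_aut_inv[OF t]] that by blast
  \<comment> \<open>H z \<equiv> c 0 u 0 \<equiv> 0 modulo P, so injectivity would give a relation for u e\<close>
  define z where "z = u e - (\<Sum>i<e. inv t (c (Suc i)) *s u i)"
  have "z \<in> Q" unfolding z_def
    using rel(3) u_Q inv_t_OL
    by (intro OL_submodule_diff[OF Q] OL_submodule_sum[OF Q] OL_submodule_scale[OF Q]) auto
  have "H z = u (Suc e) - (\<Sum>i<e. c (Suc i) *s u (Suc i))"
    unfolding z_def semilinear_diff[OF H] semilinear_lincomb[OF H] OL_aut_inv_apply[OF t] u_Suc ..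
  also have "\<dots> = p0 + c 0 *s u 0"
    unfolding rel(1) sum.lessThan_Suc_shift by simp
  finally have "H z \<in> P"
    using OL_submodule_add[OF P rel(2) OL_submodule_scale_max_ideal[OF P unif_Q[OF u_Q] c0]]
    by simp
  then have "z \<in> P" using inj \<open>z \<in> Q\<close> by blast
  moreover have "u e = z + (\<Sum>i<e. inv t (c (Suc i)) *s u i)" unfolding z_def by simp
  ultimately have "u e \<in> adjoin_seq P u e"
    using rel(3) inv_t_OL by (metis adjoin_seqI Suc_mono)
  then show False using minimal by contradiction
qed

lemma twisted_combination_identity:
  fixes H :: "'L ^ 'n \<Rightarrow> 'L ^ 'n"
  assumes H: "semilinear t H" and u_Suc: "\<And>i. u (Suc i) = H (u i)"
    and rel: "u (Suc e) = p0 + S" "S = (\<Sum>i<Suc e. c i *s u i)"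
    and b0: "b 0 = t s * c 0" and b_Suc: "\<And>i. b (Suc i) = t (b i) + t s * c (Suc i)"
  shows "H (\<Sum>i<Suc e. b i *s u i) = (\<Sum>i<Suc e. b i *s u i) + t (b e) *s p0 + (t (b e) - t s) *s S"
proof -
  define A where "A = (\<Sum>i<e. t (b i) *s u (Suc i))"
  have "(\<Sum>i<Suc e. b i *s u i) = b 0 *s u 0 + (\<Sum>i<e. b (Suc i) *s u (Suc i))"
    by (rule sum.lessThan_Suc_shift)
  also have "\<dots> = A + t s *s (c 0 *s u 0 + (\<Sum>i<e. c (Suc i) *s u (Suc i)))"
    unfolding A_def b0 b_Suc
    by (simp add: vec.scale_left_distrib sum.distrib vec.scale_right_distrib vec.scale_sum_right)
  also have "\<dots> = A + t s *s S"
    unfolding rel(2) sum.lessThan_Suc_shift ..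
  finally have y: "(\<Sum>i<Suc e. b i *s u i) = A + t s *s S" .
  have "H (\<Sum>i<Suc e. b i *s u i) = (\<Sum>i<Suc e. t (b i) *s u (Suc i))"
    unfolding semilinear_lincomb[OF H] u_Suc ..
  also have "\<dots> = A + t (b e) *s (p0 + S)"
    unfolding A_def rel(1)[symmetric] by simp
  finally show ?thesis
    unfolding y by (simp add: vec.scale_right_distrib vec.scale_left_diff_distrib)
qed

lemma lincomb_notin_if_unit_coeff:
  fixes u :: "nat \<Rightarrow> 'L ^ 'n"
  assumes P: "OL_submodule P" and b: "\<And>i. i < e \<Longrightarrow> b i \<in> OL" "OL_unit (b e)"
    and minimal: "u e \<notin> adjoin_seq P u e"
  shows "(\<Sum>i<Suc e. b i *s u i) \<notin> P"
proof
  assume y: "(\<Sum>i<Suc e. b i *s u i) \<in> P"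
  have ue: "u e = (1 / b e) *s (\<Sum>i<Suc e. b i *s u i) + (\<Sum>i<e. (- b i / b e) *s u i)"
    using OL_unit_nonzero[OF b(2)]
    by (simp add: vec.scale_right_distrib vec.scale_sum_right algebra_simps sum_negf)
  have "(1 / b e) *s (\<Sum>i<Suc e. b i *s u i) \<in> P"
    using y OL_unit_inverse_OL[OF b(2)] by (intro OL_submodule_scale[OF P]) (simp_all add: divide_inverse)
  moreover have "- b i / b e \<in> OL" if "i < e" for i
    using b(1)[OF that] by (intro OL_divide_unit[OF _ b(2)] OL_minus)
  ultimately have "u e \<in> adjoin_seq P u e" unfolding ue by (rule adjoin_seqI)
  then show False using minimal by contradiction
qed

text \<open>The equation for the coefficients of a fixed vector in the span of the iterates of a
  t-semilinear map, see fixed_vector_from_relation.\<close>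
definition twisted_solvable :: "('L \<Rightarrow> 'L) \<Rightarrow> bool" where
  "twisted_solvable t \<longleftrightarrow> (\<forall>e E. (\<forall>j\<le>e. E j \<in> OL) \<longrightarrow> OL_unit (E 0) \<longrightarrow>
      (\<exists>s. OL_unit s \<and> (\<Sum>j\<le>e. (t ^^ (Suc e - j)) s * E j) - s \<in> max_ideal))"

lemma fixed_vector_from_relation:
  fixes H :: "'L ^ 'n \<Rightarrow> 'L ^ 'n"
  assumes t: "OL_aut t" and solvable: "twisted_solvable t" and H: "semilinear t H"
    and P: "OL_submodule P" and Q: "OL_submodule Q"
    and u_Q: "\<And>i. u i \<in> Q" and unif_Q: "\<And>x. x \<in> Q \<Longrightarrow> unif *s x \<in> P"
    and u_Suc: "\<And>i. u (Suc i) = H (u i)"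
    and rel: "u (Suc e) = p0 + (\<Sum>i<Suc e. c i *s u i)" "p0 \<in> P" "\<And>i. i < Suc e \<Longrightarrow> c i \<in> OL"
    and c0: "OL_unit (c 0)" and minimal: "u e \<notin> adjoin_seq P u e"
  shows "\<exists>y\<in>Q. y \<notin> P \<and> H y - y \<in> P"
proof -
  have t_pow_OL: "(t ^^ k) x \<in> OL" if "x \<in> OL" for k x
    using OL_aut_OL_iff[OF OL_aut_funpow[OF t]] that by blast
  have "\<forall>j\<le>e. (t ^^ (e - j)) (c j) \<in> OL" using rel(3) t_pow_OL by simp
  moreover have "OL_unit ((t ^^ (e - 0)) (c 0))"
    using c0 OL_aut_unit_iff[OF OL_aut_funpow[OF t]] by blast
  ultimately obtain s where s: "OL_unit s"
    and root: "(\<Sum>j\<le>e. (t ^^ (Suc e - j)) s * (t ^^ (e - j)) (c j)) - s \<in> max_ideal"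
    using solvable[unfolded twisted_solvable_def, rule_format, of e "\<lambda>j. (t ^^ (e - j)) (c j)"]
    by blast
  define b where "b i = (\<Sum>j\<le>i. (t ^^ (Suc i - j)) s * (t ^^ (i - j)) (c j))" for i
  have b0: "b 0 = t s * c 0" by (simp add: b_def)
  have b_Suc: "b (Suc i) = t (b i) + t s * c (Suc i)" for i
  proof -
    have "t (b i) = (\<Sum>j\<le>i. (t ^^ (Suc (Suc i) - j)) s * (t ^^ (Suc i - j)) (c j))"
      unfolding b_def OL_aut_sum[OF t] OL_aut_mult[OF t] by (rule sum.cong) (auto simp: Suc_diff_le)
    then show ?thesis unfolding b_def by simp
  qed
  have b_OL: "b i \<in> OL" if "i \<le> e" for i
    unfolding b_def using that rel(3) s t_pow_OL OL_unit_OL by (intro OL_sum OL_mult) auto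
  have b_e: "b e - s \<in> max_ideal" using root unfolding b_def .
  then have b_e_unit: "OL_unit (b e)" using OL_unit_add_max_ideal[OF s] by fastforce
  define y where "y = (\<Sum>i<Suc e. b i *s u i)"
  define S where "S = (\<Sum>i<Suc e. c i *s u i)"
  have "y \<in> Q" unfolding y_def
    using b_OL u_Q by (intro OL_submodule_sum[OF Q] OL_submodule_scale[OF Q]) auto
  have "S \<in> Q" unfolding S_def
    using rel(3) u_Q by (intro OL_submodule_sum[OF Q] OL_submodule_scale[OF Q]) auto
  have "H y - y = t (b e) *s p0 + t (b e - s) *s S"
    using twisted_combination_identity[OF H u_Suc rel(1)[unfolded S_def[symmetric]] S_def b0 b_Suc]
    unfolding y_def OL_aut_diff[OF t] by simp
  also have "\<dots> \<in> P"
  proof (rule OL_submodule_add[OF P])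
    show "t (b e) *s p0 \<in> P"
      using b_OL[of e] by (intro OL_submodule_scale[OF P _ rel(2)]) (simp add: OL_aut_OL_iff[OF t])
    show "t (b e - s) *s S \<in> P"
      using b_e by (intro OL_submodule_scale_max_ideal[OF P unif_Q[OF \<open>S \<in> Q\<close>]])
        (simp add: OL_aut_max_ideal_iff[OF t])
  qed
  finally have "H y - y \<in> P" .
  moreover have "y \<notin> P"
    unfolding y_def using b_OL b_e_unit by (intro lincomb_notin_if_unit_coeff[OF P _ _ minimal]) auto
  ultimately show ?thesis using \<open>y \<in> Q\<close> by blast
qed

text \<open>Iterate H on a vector outside P until the first relation modulo P appears; its constant
  coefficient is a unit, and solving a twisted equation in the residue field produces a fixed
  vector in the span of the iterates.\<close>
lemma semilinear_fixed_vector_mod: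
  fixes H :: "'L ^ 'n \<Rightarrow> 'L ^ 'n"
  assumes t: "OL_aut t" and solvable: "twisted_solvable t" and H: "semilinear t H"
    and P: "OL_submodule P" and Q: "OL_submodule Q"
    and unif_Q: "\<And>x. x \<in> Q \<Longrightarrow> unif *s x \<in> P" and H_Q: "\<And>x. x \<in> Q \<Longrightarrow> H x \<in> Q"
    and inj: "\<And>x. x \<in> Q \<Longrightarrow> H x \<in> P \<Longrightarrow> x \<in> P"
    and w: "w \<in> Q" "w \<notin> P"
  shows "\<exists>y\<in>Q. y \<notin> P \<and> H y - y \<in> P"
proof -
  define u where "u i = (H ^^ i) w" for i
  have u_Suc: "u (Suc i) = H (u i)" for i by (simp add: u_def)
  have u_Q: "u i \<in> Q" for i by (induction i) (auto simp: u_def w H_Q)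
  have "\<exists>m. u m \<in> adjoin_seq P u m"
    using exists_adjoin_seq_relation[OF P unif_Q[OF u_Q]] .
  define d where "d = (LEAST m. u m \<in> adjoin_seq P u m)"
  have d: "u d \<in> adjoin_seq P u d" unfolding d_def by (rule LeastI_ex) fact
  have "d \<noteq> 0"
  proof
    assume "d = 0"
    then have "u 0 \<in> adjoin_seq P u 0" using d by simp
    then show False using w by (simp add: u_def adjoin_seq_def)
  qed
  then obtain e where e: "d = Suc e" by (cases d) auto
  have minimal: "u e \<notin> adjoin_seq P u e"
    using not_less_Least[of e "\<lambda>m. u m \<in> adjoin_seq P u m"] e unfolding d_def by auto
  obtain p0 c where rel: "u (Suc e) = p0 + (\<Sum>i<Suc e. c i *s u i)" "p0 \<in> P"
    "\<And>i. i < Suc e \<Longrightarrow> c i \<in> OL"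
    using d unfolding e adjoin_seq_def by blast
  have c0: "OL_unit (c 0)"
    by (rule minimal_relation_unit_coeff[OF t H P Q u_Q unif_Q u_Suc inj rel minimal])
  show ?thesis
    by (rule fixed_vector_from_relation[OF t solvable H P Q u_Q unif_Q u_Suc rel c0 minimal])
qed

end

section \<open>The Frobenius of L\<close>

locale frobenius_field =
  fixes p q :: nat and OL :: "'L::field_char_0 set" and unif :: 'L and frob :: "'L \<Rightarrow> 'L"
  assumes frob_data: "frob_data p q OL unif frob"

sublocale frobenius_field \<subseteq> discrete_valuation_ring OL unif
  using frob_data unfolding frob_data_def by unfold_locales auto

context frobenius_field
begin

lemma residue_field_alg_closed:
    "d \<ge> 1 \<Longrightarrow> \<forall>i<d. a i \<in> OL \<Longrightarrow> \<exists>x\<in>OL. x ^ d + (\<Sum>i<d. a i * x ^ i) \<in> max_ideal"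
  and frob_residue: "x \<in> OL \<Longrightarrow> frob x - x ^ q \<in> max_ideal"
  and q_prime_power: "prime p" "\<exists>f\<ge>1. q = p ^ f"
  using frob_data unfolding frob_data_def max_ideal_def by auto

lemma q_ge_2: "q \<ge> 2"
proof -
  obtain f where "f \<ge> 1" "q = p ^ f" using q_prime_power(2) by blast
  moreover have "p \<ge> 2" using q_prime_power(1) by (rule prime_ge_2_nat)
  ultimately have "p ^ 1 \<le> q" using power_increasing[of 1 f p] by simp
  with \<open>p \<ge> 2\<close> show ?thesis by simp
qed

lemma OL_aut_frob: "OL_aut frob"
proof -
  have bij: "bij frob" and OL: "frob ` OL = OL"
    and "\<forall>x y. frob (x + y) = frob x + frob y" "\<forall>x y. frob (x * y) = frob x * frob y"
    "frob 1 = 1" "frob unif = unif"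
    using frob_data unfolding frob_data_def by auto
  moreover have "frob x \<in> OL \<longleftrightarrow> x \<in> OL" for x
  proof
    assume "frob x \<in> OL"
    then obtain y where "y \<in> OL" "frob x = frob y" using OL by (metis imageE)
    then show "x \<in> OL" using bij by (metis bij_pointE)
  qed (use OL in blast)
  ultimately show ?thesis unfolding OL_aut_def by blast
qed

lemma power_diff_max_ideal:
  assumes "x \<in> OL" "y \<in> OL" "x - y \<in> max_ideal"
  shows "x ^ m - y ^ m \<in> max_ideal"
proof (induction m)
  case (Suc m)
  have "x ^ Suc m - y ^ Suc m = x ^ m * (x - y) + (x ^ m - y ^ m) * y"
    by (simp add: algebra_simps)
  also have "\<dots> \<in> max_ideal" using Suc assms by (intro max_ideal_add) auto
  finally show ?case .
qed simp

lemma frob_power_residue: "s \<in> OL \<Longrightarrow> (frob ^^ k) s - s ^ (q ^ k) \<in> max_ideal"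
proof (induction k)
  case (Suc k)
  have sk: "(frob ^^ k) s \<in> OL"
    using OL_aut_OL_iff[OF OL_aut_funpow[OF OL_aut_frob]] Suc.prems by blast
  have "(frob ^^ Suc k) s - s ^ (q ^ Suc k)
      = (frob ((frob ^^ k) s) - ((frob ^^ k) s) ^ q) + (((frob ^^ k) s) ^ q - (s ^ (q ^ k)) ^ q)"
    by (simp add: power_mult[symmetric] mult.commute)
  also have "\<dots> \<in> max_ideal"
    using frob_residue[OF sk] power_diff_max_ideal[OF sk OL_power Suc.IH] Suc.prems
    by (intro max_ideal_add)
  finally show ?case .
qed simp

lemma frob_sum_residue:
  assumes s: "s \<in> OL" and e: "\<And>j. j \<in> A \<Longrightarrow> e j \<in> OL"
    and powers: "(\<Sum>j\<in>A. e j * s ^ (q ^ \<kappa> j)) \<in> max_ideal"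
  shows "(\<Sum>j\<in>A. e j * (frob ^^ \<kappa> j) s) \<in> max_ideal"
proof -
  have "(\<Sum>j\<in>A. e j * ((frob ^^ \<kappa> j) s - s ^ (q ^ \<kappa> j))) \<in> max_ideal"
    using e frob_power_residue[OF s] by (intro max_ideal_sum max_ideal_mult_left) auto
  then have "(\<Sum>j\<in>A. e j * ((frob ^^ \<kappa> j) s - s ^ (q ^ \<kappa> j))) + (\<Sum>j\<in>A. e j * s ^ (q ^ \<kappa> j))
      \<in> max_ideal"
    using powers by (rule max_ideal_add)
  then show ?thesis by (simp add: right_diff_distrib sum_subtractf)
qed

lemma poly_unit_root:
  assumes D: "D \<ge> 1" and A: "\<And>k. A k \<in> OL" and AD: "OL_unit (A D)" and A0: "OL_unit (A 0)"
  shows "\<exists>s. OL_unit s \<and> (\<Sum>k\<le>D. A k * s ^ k) \<in> max_ideal"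
proof -
  obtain s where s: "s \<in> OL" and root: "s ^ D + (\<Sum>k<D. (A k / A D) * s ^ k) \<in> max_ideal"
    using residue_field_alg_closed[OF D, of "\<lambda>k. A k / A D"] A OL_divide_unit[OF _ AD] by blast
  have "(\<Sum>k\<le>D. A k * s ^ k) = A D * (s ^ D + (\<Sum>k<D. (A k / A D) * s ^ k))"
    using OL_unit_nonzero[OF AD]
    by (simp add: sum_distrib_left lessThan_Suc_atMost[symmetric] algebra_simps)
  also have "\<dots> \<in> max_ideal" using root A by (rule max_ideal_mult_left[rotated])
  finally have P: "(\<Sum>k\<le>D. A k * s ^ k) \<in> max_ideal" .
  have "OL_unit s"
  proof (rule ccontr)
    assume "\<not> OL_unit s"
    then have "s \<in> max_ideal" using s nonunit_max_ideal by blast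
    obtain D' where D': "D = Suc D'" using D by (cases D) auto
    have "(\<Sum>k\<le>D'. A (Suc k) * s ^ Suc k) \<in> max_ideal"
      using \<open>s \<in> max_ideal\<close> s A by (intro max_ideal_sum max_ideal_mult_left) auto
    then have "(\<Sum>k\<le>D. A k * s ^ k) - (\<Sum>k\<le>D'. A (Suc k) * s ^ Suc k) \<in> max_ideal"
      using P by blast
    then have "A 0 \<in> max_ideal" unfolding D' sum.atMost_Suc_shift by simp
    then show False using A0 OL_unit_not_max_ideal by blast
  qed
  then show ?thesis using P by blast
qed


text \<open>Modulo the maximal ideal frob^k s is s^(q^k), so the sum below is an ordinary polynomial in s
  of degree q^N whose lowest monomial is s; its roots over the algebraically closed residue field
  other than 0 give unit solutions.\<close>
lemma frob_poly_unit_root: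
  fixes \<kappa> :: "nat \<Rightarrow> nat" and e :: "nat \<Rightarrow> 'L"
  assumes N: "N \<ge> 1" and \<kappa>: "inj_on \<kappa> {..N}" "\<And>j. j \<le> N \<Longrightarrow> \<kappa> j \<le> N"
    and ja: "ja \<le> N" "\<kappa> ja = 0" "OL_unit (e ja)" and jb: "jb \<le> N" "\<kappa> jb = N" "OL_unit (e jb)"
    and e: "\<And>j. j \<le> N \<Longrightarrow> e j \<in> OL"
  shows "\<exists>s. OL_unit s \<and> (\<Sum>j\<le>N. e j * (frob ^^ \<kappa> j) s) \<in> max_ideal"
proof -
  have q: "q \<ge> 2" by (rule q_ge_2)
  define D where "D = q ^ N - 1"
  define ex where "ex j = q ^ \<kappa> j - 1" for j
  have q_pow: "q ^ \<kappa> j = Suc (ex j)" for j unfolding ex_def using q by simp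
  have ex_le: "ex j \<le> D" if "j \<le> N" for j
    using power_increasing[OF \<kappa>(2)[OF that], of q] q unfolding ex_def D_def
    by (intro diff_le_mono) simp
  have ex_inj: "i = j" if "i \<le> N" "j \<le> N" "ex i = ex j" for i j
  proof -
    have "q ^ \<kappa> i = q ^ \<kappa> j" using that(3) q_pow by simp
    then have "\<kappa> i = \<kappa> j" using q by simp
    then show ?thesis using \<kappa>(1) that unfolding inj_on_def by auto
  qed
  define A where "A k = (\<Sum>j\<in>{j. j \<in> {..N} \<and> ex j = k}. e j)" for k
  have A_single: "A (ex j) = e j" if "j \<le> N" for j
  proof -
    have "{i. i \<in> {..N} \<and> ex i = ex j} = {j}" using ex_inj that by auto
    then show ?thesis unfolding A_def by simp
  qed
  have D: "D \<ge> 1"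
    using power_increasing[OF N, of q] q unfolding D_def by simp
  have A: "A k \<in> OL" for k unfolding A_def using e by (intro OL_sum) auto
  have "OL_unit (A D)" "OL_unit (A 0)"
    using A_single[OF jb(1)] A_single[OF ja(1)] ja jb by (simp_all add: ex_def D_def)
  then have "\<exists>s. OL_unit s \<and> (\<Sum>k\<le>D. A k * s ^ k) \<in> max_ideal"
    by (rule poly_unit_root[OF D A])
  then obtain s where s: "OL_unit s" and root: "(\<Sum>k\<le>D. A k * s ^ k) \<in> max_ideal"
    by blast
  have "(\<Sum>k\<le>D. A k * s ^ k) = (\<Sum>j\<le>N. e j * s ^ ex j)"
  proof -
    have "(\<Sum>j\<le>N. e j * s ^ ex j) = (\<Sum>k\<le>D. (\<Sum>j\<in>{j. j \<in> {..N} \<and> ex j = k}. e j * s ^ ex j))"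
      by (rule sum.group[symmetric]) (use ex_le in auto)
    also have "\<dots> = (\<Sum>k\<le>D. A k * s ^ k)"
      unfolding A_def sum_distrib_right by (rule sum.cong) auto
    finally show ?thesis ..
  qed
  then have "(\<Sum>j\<le>N. e j * s ^ (q ^ \<kappa> j)) = s * (\<Sum>k\<le>D. A k * s ^ k)"
    by (simp add: q_pow sum_distrib_left algebra_simps)
  also have "\<dots> \<in> max_ideal" using root OL_unit_OL[OF s] by (rule max_ideal_mult_left[rotated])
  finally have powers: "(\<Sum>j\<le>N. e j * s ^ (q ^ \<kappa> j)) \<in> max_ideal" .
  have "(\<Sum>j\<le>N. e j * (frob ^^ \<kappa> j) s) \<in> max_ideal"
    by (rule frob_sum_residue[OF OL_unit_OL[OF s] _ powers]) (use e in simp)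
  then show ?thesis using s by blast
qed

lemma twisted_solvable_frob: "twisted_solvable frob"
  unfolding twisted_solvable_def
proof (intro allI impI)
  fix e :: nat and E :: "nat \<Rightarrow> 'L"
  assume E: "\<forall>j\<le>e. E j \<in> OL" and E0: "OL_unit (E 0)"
  define N where "N = Suc e"
  define E' where "E' j = (if j \<le> e then E j else -1)" for j
  have "\<exists>s. OL_unit s \<and> (\<Sum>j\<le>N. E' j * (frob ^^ (N - j)) s) \<in> max_ideal"
  proof (rule frob_poly_unit_root[where ja = N and jb = 0])
    show "inj_on (\<lambda>j. N - j) {..N}" unfolding inj_on_def by auto
  qed (use E E0 in \<open>auto simp: E'_def N_def\<close>)
  then obtain s where s: "OL_unit s" "(\<Sum>j\<le>N. E' j * (frob ^^ (N - j)) s) \<in> max_ideal"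
    by blast
  have "(\<Sum>j\<le>N. E' j * (frob ^^ (N - j)) s) = (\<Sum>j\<le>e. (frob ^^ (Suc e - j)) s * E j) - s"
    by (simp add: N_def E'_def mult.commute)
  then show "\<exists>s. OL_unit s \<and> (\<Sum>j\<le>e. (frob ^^ (Suc e - j)) s * E j) - s \<in> max_ideal"
    using s by auto
qed

text \<open>For inv frob the same equation is solved through the substitution s = frob^(e+1) s'.\<close>
lemma twisted_solvable_inv_frob: "twisted_solvable (inv frob)"
  unfolding twisted_solvable_def
proof (intro allI impI)
  fix e :: nat and E :: "nat \<Rightarrow> 'L"
  assume E: "\<forall>j\<le>e. E j \<in> OL" and E0: "OL_unit (E 0)"
  define N where "N = Suc e"
  define E' where "E' j = (if j \<le> e then E j else -1)" for j
  have "\<exists>s. OL_unit s \<and> (\<Sum>j\<le>N. E' j * (frob ^^ id j) s) \<in> max_ideal"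
    by (rule frob_poly_unit_root[where ja = 0 and jb = N]) (use E E0 in \<open>auto simp: E'_def N_def\<close>)
  then obtain s where s: "OL_unit s" "(\<Sum>j\<le>N. E' j * (frob ^^ id j) s) \<in> max_ideal"
    by blast
  define s' where "s' = (frob ^^ N) s"
  have "OL_unit s'" unfolding s'_def using s(1) OL_aut_unit_iff[OF OL_aut_funpow[OF OL_aut_frob]] by blast
  have unshift: "(inv frob ^^ (N - j)) s' = (frob ^^ j) s" if "j \<le> N" for j
  proof -
    have "s' = (frob ^^ (N - j)) ((frob ^^ j) s)"
      unfolding s'_def using that by (simp flip: funpow_add[THEN fun_cong, unfolded comp_def])
    then show ?thesis
      using inv_fn_o_fn_is_id[OF OL_aut_bij[OF OL_aut_frob], of "N - j"] by (metis comp_apply)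
  qed
  have "(\<Sum>j\<le>N. E' j * (frob ^^ id j) s) = (\<Sum>j\<le>e. (inv frob ^^ (Suc e - j)) s' * E j) - s'"
    using unshift by (simp add: N_def E'_def s'_def mult.commute)
  then show "\<exists>s. OL_unit s \<and> (\<Sum>j\<le>e. (inv frob ^^ (Suc e - j)) s * E j) - s \<in> max_ideal"
    using s \<open>OL_unit s'\<close> by auto
qed


text \<open>Case analysis on J = {x \<in> Q. V x \<in> P}, the kernel of V modulo P. If F kills a vector of
  J/P, that vector spans the line. Otherwise F is injective on J/P, and a fixed vector of F in
  J/P works if J \<noteq> P. If J = P, then V is injective on Q/P and a fixed vector of V works,
  since F maps Q into J because V F = unif.\<close>
lemma common_stable_line:
  fixes F V :: "'L ^ 'n \<Rightarrow> 'L ^ 'n"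
  assumes F: "semilinear frob F" and V: "semilinear (inv frob) V"
    and P: "OL_submodule P" and Q: "OL_submodule Q" and PQ: "P \<subseteq> Q" "P \<noteq> Q"
    and unif_Q: "\<And>x. x \<in> Q \<Longrightarrow> unif *s x \<in> P"
    and F_Q: "\<And>x. x \<in> Q \<Longrightarrow> F x \<in> Q" and V_Q: "\<And>x. x \<in> Q \<Longrightarrow> V x \<in> Q"
    and VF: "\<And>x. V (F x) = unif *s x"
  obtains x where "x \<in> Q" "x \<notin> P" "F x \<in> adjoin_line P x" "V x \<in> adjoin_line P x"
proof -
  have frob: "OL_aut frob" "OL_aut (inv frob)" using OL_aut_frob OL_aut_inv by blast+
  define J where "J = {x \<in> Q. V x \<in> P}"
  have J: "OL_submodule J"
    unfolding OL_submodule_def J_def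
    using OL_submodule_zero[OF Q] OL_submodule_zero[OF P] OL_submodule_add[OF Q] OL_submodule_add[OF P]
      OL_submodule_scale[OF Q] OL_submodule_scale[OF P] OL_aut_OL_iff[OF frob(2)]
    by (simp add: semilinear_zero[OF V] semilinear_add[OF V] semilinear_scale[OF V])
  have JQ: "J \<subseteq> Q" unfolding J_def by auto
  have F_J: "F x \<in> J" if "x \<in> Q" for x
    unfolding J_def using F_Q[OF that] VF unif_Q[OF that] by simp
  consider (F_kills) x where "x \<in> J" "x \<notin> P" "F x \<in> P"
    | (F_inj) "\<And>x. x \<in> J \<Longrightarrow> F x \<in> P \<Longrightarrow> x \<in> P" "\<not> J \<subseteq> P"
    | (V_inj) "J \<subseteq> P"
    by blast
  then show thesis
  proof cases
    case F_kills
    then show thesis using that JQ subset_adjoin_line[OF P] unfolding J_def by blast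
  next
    case F_inj
    then obtain w where "w \<in> J" "w \<notin> P" by blast
    then obtain y where "y \<in> J" "y \<notin> P" "F y - y \<in> P"
      using semilinear_fixed_vector_mod[OF frob(1) twisted_solvable_frob F P J _ _ F_inj(1)]
        unif_Q JQ F_J by blast
    then show thesis
      using that JQ subset_adjoin_line[OF P] mem_adjoin_line_if_diff unfolding J_def by blast
  next
    case V_inj
    obtain w where "w \<in> Q" "w \<notin> P" using PQ by blast
    then obtain y where "y \<in> Q" "y \<notin> P" "V y - y \<in> P"
      using semilinear_fixed_vector_mod[OF frob(2) twisted_solvable_inv_frob V P Q unif_Q V_Q]
        V_inj unfolding J_def by blast
    then show thesis
      using that F_J V_inj subset_adjoin_line[OF P] mem_adjoin_line_if_diff by blast
  qed
qed

end

theorem lemma1p3: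
  fixes p q :: nat and OL :: "'L::field_char_0 set" and unif :: 'L and frob :: "'L \<Rightarrow> 'L"
    and Fr :: "'L ^ 'n::finite \<Rightarrow> 'L ^ 'n"
    and M M' :: "('L ^ 'n) set" and r :: nat
  assumes hyp_L: "frob_data p q OL unif frob"
    and F_bij: "bij Fr"
    and F_add: "\<And>x y. Fr (x + y) = Fr x + Fr y"
    and F_semilin: "\<And>c x. Fr (c *s x) = frob c *s Fr x"
    and r_le: "r \<le> CARD('n)"
    and latM: "is_lattice OL M" and latM': "is_lattice OL M'"
    and sub1: "M' \<subset> M" and sub2: "(\<lambda>x. unif *s x) ` M \<subset> M'"
    and invM: "inv_omega OL unif M (Fr ` M) r"
    and invM': "inv_omega OL unif M' (Fr ` M') r"
  shows "\<exists>Mt. is_lattice OL Mt \<and> M' \<subseteq> Mt \<and> Mt \<subseteq> M \<and> quot_dim_one OL Mt M'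
              \<and> inv_omega OL unif Mt (Fr ` Mt) r"
proof -
  interpret frobenius_field p q OL unif frob by (rule frobenius_field.intro[OF hyp_L])
  have F: "semilinear frob Fr" unfolding semilinear_def using F_add F_semilin by blast
  note stable = inv_omega_stable[OF OL_aut_frob F F_bij invM] inv_omega_stable[OF OL_aut_frob F F_bij invM']
  obtain B' where B': "lin_indep_fam B'" "M' = O_span OL B'" using latM' unfolding is_lattice_def by blast
  have M: "OL_submodule M" "OL_submodule M'"
    using latM latM' OL_submodule_O_span unfolding is_lattice_def by auto
  have M'M: "M' \<subseteq> M" "M' \<noteq> M" and unif_M: "\<And>x. x \<in> M \<Longrightarrow> unif *s x \<in> M'"
    using sub1 sub2 by auto
  obtain x where x: "x \<in> M" "x \<notin> M'" "Fr x \<in> adjoin_line M' x" "verschiebung Fr x \<in> adjoin_line M' x"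
    using common_stable_line[OF F semilinear_verschiebung[OF OL_aut_frob F F_bij] M(2) M(1) M'M unif_M
        stable(1,2) verschiebung_apply[OF OL_aut_frob F F_bij]]
    by blast
  have "M' \<subseteq> adjoin_line M' x" "adjoin_line M' x \<subseteq> M"
    using subset_adjoin_line[OF M(2)] adjoin_line_subset[OF M(1) M'M(1) x(1)] by auto
  then show ?thesis
    using inv_omega_adjoin_line[OF OL_aut_frob F F_bij invM B' stable(3,4) x(2) unif_M[OF x(1)] x(3,4)]
      quot_dim_one_adjoin_line[OF M(2) x(2)] by blast
qed

end
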